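(* Let $M\in\mathbb{N}^*$, $\mathcal{L}_M=\{0,\dots,M\}$, $x_0\in\mathcal{L}_M$, $y_0\in\mathbb{N}$. Let $\lambda:\mathbb{R}_+\times\mathcal{L}_M\to\mathbb{R}_+$ be such that $t\mapsto\lambda(t,x)$ is càdlàg for every $x$, $\lambda(t,M)=0$ for all $t\ge 0$, and $\lambda$ is bounded on $[0,T]\times\mathcal{L}_M$ for every $T>0$. Let $f:\mathbb{R}\to\mathbb{R}$ be continuous with $0<\underline{f}\le f(x)\le\bar f<\infty$ for all $x$. Let $(\mu^k_{ij})_{i,j\ge 0}$, $k\in\mathcal{L}_M$, be intensity matrices satisfying: $\mu^k_{ij}\ge 0$ for $i\ne j$; $\mu^k_{ii}\le 0$; $\sum_{j\ge0}\mu^k_{ij}=0$ for all $i$; and $\sup_{i\in\mathbb{N}}|\mu^k_{ii}|<\infty$ for every $k$. Then the equation $P'(t)=\Psi(t,P(t))$, $P(0)=P_0$, admits a unique solution $P$ on $\mathbb{R}_+$ satisfying $P(t)\ge 0$ (componentwise) and $|P(t)|=1$ for all $t\ge 0$, where $\Psi$ and $P_0$ are as described in the context.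
   Context: Let $E$ be the set of real families $u=(u^i_j)_{0\le i\le M,\,j\ge 0}$, $E_+$ the subset with all $u^i_j\ge 0$, $E_+^*$ the subset with all $u^i_j>0$, and $|u|=\sum_{i=0}^M\sum_{j\ge0}|u^i_j|$; solutions are sought among summable families, i.e. $P(t)$ with $|P(t)|<\infty$. $P_0\in E$ is given by $(P_0)^{x_0}_{y_0}=1$ and $(P_0)^i_j=0$ for $(i,j)\ne(x_0,y_0)$. For $x\in E_+$ and $i\in\mathcal{L}_M$ set $\varphi(x,i)=\frac{\sum_{l\ge0}f(l)x^i_l}{\sum_{l\ge0}x^i_l}$, and define $\Psi:\mathbb{R}_+\times E_+\to E$ by $$(\Psi(t,x))^i_j=\sum_{k\ge0}\mu^i_{kj}x^i_k+\mathbf{1}_{\{i\ge1\}}\frac{\lambda(t,i-1)}{\varphi(x,i-1)}f(j)\,x^{i-1}_j-\mathbf{1}_{\{i\le M-1\}}\frac{\lambda(t,i)}{\varphi(x,i)}f(j)\,x^i_j,$$ where, when $x^i_l=0$ for all $l$ (so that $\varphi(x,i)$ is undefined), the terms $\frac{x^i_j}{\varphi(x,i)}$ are set equal to $0$ (the continuous extension from $E_+^*$, using $\underline f\le\varphi\le\bar f$ there). This equation is the Fokker–Planck equation for $p(t,i,j)=\mathbb{P}(X_t=i,Y_t=j)$ of a stochastic local intensity model where the loss counter $X$ jumps by $+1$ at rate $\lambda(t,X_t)f(Y_t)/\mathbb{E}[f(Y_t)\mid X_t]$ and $Y$ is a Markov chain on $\mathbb{N}$ with transition rates $\mu^{X_t}_{ij}$.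 *)

theory Defs
  imports "HOL-Analysis.Analysis"
begin

text \<open>Families u = (u^i_j), 0 <= i <= M, j >= 0, are represented as functions
  nat => nat => real (first argument i, second argument j); only i <= M matters.\<close>

type_synonym fam = "nat \<Rightarrow> nat \<Rightarrow> real"

definition summable_fam :: "nat \<Rightarrow> fam \<Rightarrow> bool" where
  "summable_fam M u \<longleftrightarrow> (\<forall>i\<le>M. summable (\<lambda>j. \<bar>u i j\<bar>))"

definition nonneg_fam :: "nat \<Rightarrow> fam \<Rightarrow> bool" where
  "nonneg_fam M u \<longleftrightarrow> (\<forall>i\<le>M. \<forall>j. 0 \<le> u i j)"

definition fam_norm :: "nat \<Rightarrow> fam \<Rightarrow> real" where
  "fam_norm M u = (\<Sum>i\<le>M. \<Sum>j. \<bar>u i j\<bar>)"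

definition P0 :: "nat \<Rightarrow> nat \<Rightarrow> fam" where
  "P0 x0 y0 = (\<lambda>i j. if i = x0 \<and> j = y0 then 1 else 0)"

definition phi :: "(real \<Rightarrow> real) \<Rightarrow> fam \<Rightarrow> nat \<Rightarrow> real" where
  "phi f x i = (\<Sum>l. f (real l) * x i l) / (\<Sum>l. x i l)"

text \<open>x^i_j / phi(x,i), set to 0 when x^i_l = 0 for all l (continuous extension).\<close>
definition frac :: "(real \<Rightarrow> real) \<Rightarrow> fam \<Rightarrow> nat \<Rightarrow> nat \<Rightarrow> real" where
  "frac f x i j = (if (\<forall>l. x i l = 0) then 0 else x i j / phi f x i)"

text \<open>Psi(t,x)^i_j; lam t k = lambda(t,k), mu k i j = mu^k_{ij}.\<close>
definition Psi :: "nat \<Rightarrow> (real \<Rightarrow> nat \<Rightarrow> real) \<Rightarrow> (real \<Rightarrow> real)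
    \<Rightarrow> (nat \<Rightarrow> nat \<Rightarrow> nat \<Rightarrow> real) \<Rightarrow> real \<Rightarrow> fam \<Rightarrow> fam" where
  "Psi M lam f mu t x = (\<lambda>i j.
      (\<Sum>k. mu i k j * x i k)
    + (if 1 \<le> i then lam t (i - 1) * f (real j) * frac f x (i - 1) j else 0)
    - (if i \<le> M - 1 then lam t i * f (real j) * frac f x i j else 0))"

text \<open>Solution of P'(t) = Psi(t,P(t)), P(0) = P_0 on R_+, understood in integral form
  P(t) = P_0 + int_0^t Psi(s,P(s)) ds (componentwise), with P taking values in the
  summable nonnegative families (the domain of Psi) and continuous for the norm |.|.\<close>
definition is_solution :: "nat \<Rightarrow> (real \<Rightarrow> nat \<Rightarrow> real) \<Rightarrow> (real \<Rightarrow> real)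
    \<Rightarrow> (nat \<Rightarrow> nat \<Rightarrow> nat \<Rightarrow> real) \<Rightarrow> nat \<Rightarrow> nat \<Rightarrow> (real \<Rightarrow> fam) \<Rightarrow> bool" where
  "is_solution M lam f mu x0 y0 P \<longleftrightarrow>
     (\<forall>t\<ge>0. nonneg_fam M (P t) \<and> summable_fam M (P t)) \<and>
     (\<forall>t\<ge>0. ((\<lambda>s. fam_norm M (\<lambda>i j. P s i j - P t i j)) \<longlongrightarrow> 0) (at t within {0..})) \<and>
     (\<forall>t\<ge>0. \<forall>i\<le>M. \<forall>j.
        ((\<lambda>s. Psi M lam f mu s (P s) i j) has_integral (P t i j - P0 x0 y0 i j)) {0..t})"

end

theory Submission
  imports Defs
begin

text \<open>
  Evaluating \<open>\<Psi>\<close> at the positive part \<open>x\<^sup>+\<close> gives a field \<open>\<Phi>(t, x) = \<Psi>(t, x\<^sup>+)\<close> that is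
  Lipschitz for \<open>|\<cdot>|\<close> uniformly on bounded time intervals: the generator part costs at most
  \<open>2 sup\<^sub>i |\<mu>\<^sub>i\<^sub>i|\<close>, and \<open>a \<mapsto> a / \<phi>(a)\<close> is Lipschitz on nonnegative summable sequences since \<open>f\<close> is
  bounded above and away from zero. Picard iteration for \<open>P = P\<^sub>0 + \<integral>\<Phi>(P)\<close> therefore converges to a
  continuous solution of this truncated equation, and Gronwall's estimate shows that it has no other.
  Because \<open>\<Phi>(t, x)\<^sup>i\<^sub>j \<ge> 0\<close> whenever \<open>x\<^sup>i\<^sub>j \<le> 0\<close>, this solution stays nonnegative, hence solves the
  original equation; conversely every nonnegative solution solves the truncated one, which gives
  uniqueness. Mass is conserved because the rows of each \<open>\<mu>\<^sup>k\<close> sum to zero and the jump terms,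
  which move the mass \<open>\<lambda>(t, i) \<Sum>\<^sub>j P\<^sup>i\<^sub>j\<close> from level \<open>i\<close> to level \<open>i + 1\<close>, telescope over the levels.
\<close>

lemma nonneg_bounded_partial_sums:
  fixes a :: "nat \<Rightarrow> real"
  assumes "\<And>j. 0 \<le> a j" and "\<And>N. (\<Sum>j<N. a j) \<le> B"
  shows "summable a \<and> suminf a \<le> B"
proof -
  have "summable a"
  proof (rule bounded_imp_summable[of a B])
    show "(\<Sum>k\<le>n. a k) \<le> B" for n
      using assms(2)[of "Suc n"] by (simp add: lessThan_Suc_atMost)
  qed (use assms in auto)
  then show ?thesis using suminf_le_const assms(2) by blast
qed

lemma abs_summable_has_sum_suminf:
  fixes w :: "nat \<Rightarrow> real"
  assumes "summable (\<lambda>j. \<bar>w j\<bar>)"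
  shows "(w has_sum suminf w) UNIV"
  using norm_summable_imp_has_sum[of w "suminf w"] assms summable_rabs_cancel
  by (simp add: summable_sums)

lemma abs_le_suminf_abs:
  fixes g :: "nat \<Rightarrow> real"
  shows "summable (\<lambda>j. \<bar>g j\<bar>) \<Longrightarrow> \<bar>g j\<bar> \<le> (\<Sum>j. \<bar>g j\<bar>)"
  using sum_le_suminf[of "\<lambda>j. \<bar>g j\<bar>" "{j}"] by simp

lemma suminf_swap_abs_summable:
  fixes w :: "nat \<Rightarrow> nat \<Rightarrow> real"
  assumes rows: "\<And>k. summable (\<lambda>j. \<bar>w k j\<bar>)"
    and total: "summable (\<lambda>k. \<Sum>j. \<bar>w k j\<bar>)"
  shows "(\<Sum>j. \<Sum>k. w k j) = (\<Sum>k. \<Sum>j. w k j)"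
proof -
  have cols: "summable (\<lambda>k. \<bar>w k j\<bar>)" for j
    by (rule summable_comparison_test[OF _ total])
       (use abs_le_suminf_abs[OF rows] in auto)
  have "(\<lambda>p. norm ((\<lambda>(k, j). w k j) p)) summable_on UNIV \<times> UNIV"
  proof (rule Infinite_Sum.abs_summable_on_Sigma_iff[where A=UNIV and B="\<lambda>_. UNIV", THEN iffD2], intro conjI ballI)
    show "(\<lambda>j. norm ((\<lambda>(k, j). w k j) (k, j))) summable_on UNIV" for k
      using has_sum_imp_summable[OF abs_summable_has_sum_suminf[of "\<lambda>j. \<bar>w k j\<bar>"]] rows by simp
    have "(\<Sum>\<^sub>\<infinity>j. \<bar>w k j\<bar>) = (\<Sum>j. \<bar>w k j\<bar>)" for k
      using infsumI[OF abs_summable_has_sum_suminf[of "\<lambda>j. \<bar>w k j\<bar>"]] rows by simp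
    then show "(\<lambda>k. norm (\<Sum>\<^sub>\<infinity>j. norm ((\<lambda>(k, j). w k j) (k, j)))) summable_on UNIV"
      using has_sum_imp_summable[OF abs_summable_has_sum_suminf[of "\<lambda>k. \<Sum>j. \<bar>w k j\<bar>"]] total
      by (simp add: suminf_nonneg rows)
  qed
  then have "(\<lambda>(k, j). w k j) summable_on UNIV \<times> UNIV"
    by (rule Infinite_Sum.abs_summable_summable)
  then have S: "((\<lambda>(k, j). w k j) has_sum (\<Sum>\<^sub>\<infinity>p\<in>UNIV \<times> UNIV. (\<lambda>(k, j). w k j) p)) (UNIV \<times> UNIV)"
    (is "(_ has_sum ?S) _") by (rule has_sum_infsum)
  have "((\<lambda>k. \<Sum>j. w k j) has_sum ?S) UNIV"
    by (rule has_sum_SigmaD[OF S]) (simp add: abs_summable_has_sum_suminf rows)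
  moreover have "((\<lambda>(j, k). w k j) has_sum ?S) (UNIV \<times> UNIV)"
    using has_sum_swap[THEN iffD1, OF S] by (simp add: case_prod_unfold)
  then have "((\<lambda>j. \<Sum>k. w k j) has_sum ?S) UNIV"
    by (rule has_sum_SigmaD) (simp add: abs_summable_has_sum_suminf cols)
  ultimately show ?thesis by (metis has_sum_imp_sums sums_unique)
qed

lemma summable_exp_terms: "summable (\<lambda>k. c ^ k / fact k :: real)"
  using summable_exp[of c] by (simp add: divide_inverse mult.commute)

definition exp_tail :: "real \<Rightarrow> nat \<Rightarrow> real" where
  "exp_tail c n = (\<Sum>k. c ^ (k + n) / fact (k + n))"

lemma sum_le_exp_tail:
  assumes "0 \<le> c" and "n \<le> m"
  shows "(\<Sum>k\<in>{n..<m}. c ^ k / fact k) \<le> exp_tail c n"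
proof -
  have "(\<Sum>k\<in>{n..<m}. c ^ k / fact k) = (\<Sum>k<m - n. c ^ (k + n) / fact (k + n))"
    using sum.shift_bounds_nat_ivl[of "\<lambda>k. c ^ k / fact k" 0 n "m - n"] assms(2)
    by (simp add: atLeast0LessThan)
  also have "\<dots> \<le> exp_tail c n"
    unfolding exp_tail_def using assms(1)
    by (intro sum_le_suminf summable_ignore_initial_segment[OF summable_exp_terms]) auto
  finally show ?thesis .
qed

lemma exp_tail_tendsto_0: "exp_tail c \<longlonglongrightarrow> 0"
proof -
  have "(\<lambda>n. (\<Sum>k. c ^ k / fact k) - (\<Sum>k<n. c ^ k / fact k)) \<longlonglongrightarrow> (\<Sum>k. c ^ k / fact k) - (\<Sum>k. c ^ k / fact k)"
    by (intro tendsto_diff tendsto_const summable_LIMSEQ summable_exp_terms)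
  moreover have "exp_tail c = (\<lambda>n. (\<Sum>k. c ^ k / fact k) - (\<Sum>k<n. c ^ k / fact k))"
    unfolding exp_tail_def by (intro ext suminf_minus_initial_segment[OF summable_exp_terms])
  ultimately show ?thesis by simp
qed

lemma sum_shift_down:
  "(\<Sum>i\<le>Suc m. if 1 \<le> i then c (i - 1) else 0) = (\<Sum>i\<le>m. c i)"
  by (subst sum.atMost_Suc_shift) simp

lemma sum_shift_down_le:
  fixes E :: "nat \<Rightarrow> real"
  assumes "\<And>i. i \<le> M \<Longrightarrow> 0 \<le> E i"
  shows "(\<Sum>i\<le>M. if 1 \<le> i then E (i - 1) else 0) \<le> (\<Sum>i\<le>M. E i)"
proof (cases M)
  case (Suc m)
  then show ?thesis using sum_shift_down[where c=E and m=m] assms[of M] by simp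
qed (use assms in simp)

section \<open>Intensity matrices\<close>

definition vmult :: "(nat \<Rightarrow> nat \<Rightarrow> real) \<Rightarrow> (nat \<Rightarrow> real) \<Rightarrow> nat \<Rightarrow> real" where
  "vmult q a j = (\<Sum>k. q k j * a k)"

locale intensity_matrix =
  fixes q :: "nat \<Rightarrow> nat \<Rightarrow> real" and C :: real
  assumes offdiag_nonneg: "\<And>i j. i \<noteq> j \<Longrightarrow> 0 \<le> q i j"
    and diag_nonpos: "\<And>i. q i i \<le> 0"
    and rows_sum_zero: "\<And>i. (\<lambda>j. q i j) sums 0"
    and diag_bounded: "\<And>i. \<bar>q i i\<bar> \<le> C"
begin

lemma abs_row_sums: "(\<lambda>j. \<bar>q i j\<bar>) sums (-2 * q i i)"
proof -
  have "(\<lambda>j. q i j - (if j = i then 2 * q i i else 0)) sums (0 - 2 * q i i)"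
    by (intro sums_diff rows_sum_zero sums_single)
  moreover have "\<bar>q i j\<bar> = q i j - (if j = i then 2 * q i i else 0)" for j
    using offdiag_nonneg[of i j] diag_nonpos[of i] by (cases "j = i") auto
  ultimately show ?thesis by simp
qed

lemma C_nonneg: "0 \<le> C"
  using diag_bounded[of 0] by simp

lemma summable_abs_row: "summable (\<lambda>j. \<bar>q i j\<bar>)"
  using abs_row_sums sums_summable by blast

lemma abs_row_sum_le: "(\<Sum>j. \<bar>q i j\<bar>) \<le> 2 * C"
  using sums_unique[OF abs_row_sums[of i]] diag_bounded[of i] diag_nonpos[of i] by simp

lemma abs_entry_le: "\<bar>q i j\<bar> \<le> 2 * C"
  using sum_le_suminf[OF summable_abs_row[of i], of "{j}"] abs_row_sum_le[of i] by simp

lemma summable_abs_vmult_terms: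
  assumes "summable (\<lambda>k. \<bar>a k\<bar>)"
  shows "summable (\<lambda>k. \<bar>q k j * a k\<bar>)"
  by (rule summable_comparison_test[OF _ summable_mult[OF assms, of "2 * C"]])
     (auto simp: abs_mult intro!: mult_right_mono abs_entry_le)

lemma vmult_l1_bound:
  assumes "summable (\<lambda>k. \<bar>a k\<bar>)"
  shows "summable (\<lambda>j. \<bar>vmult q a j\<bar>) \<and> (\<Sum>j. \<bar>vmult q a j\<bar>) \<le> 2 * C * (\<Sum>k. \<bar>a k\<bar>)"
proof (rule nonneg_bounded_partial_sums)
  fix N
  have row_partial: "(\<Sum>j<N. \<bar>q k j * a k\<bar>) \<le> 2 * C * \<bar>a k\<bar>" for k
  proof -
    have "(\<Sum>j<N. \<bar>q k j * a k\<bar>) = (\<Sum>j<N. \<bar>q k j\<bar>) * \<bar>a k\<bar>"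
      by (simp add: abs_mult sum_distrib_right)
    also have "\<dots> \<le> 2 * C * \<bar>a k\<bar>"
      using sum_le_suminf[OF summable_abs_row, of "{..<N}" k] abs_row_sum_le[of k]
      by (intro mult_right_mono) auto
    finally show ?thesis .
  qed
  have "(\<Sum>j<N. \<bar>vmult q a j\<bar>) \<le> (\<Sum>j<N. \<Sum>k. \<bar>q k j * a k\<bar>)"
    unfolding vmult_def by (intro sum_mono summable_rabs summable_abs_vmult_terms assms)
  also have "\<dots> = (\<Sum>k. \<Sum>j<N. \<bar>q k j * a k\<bar>)"
    by (rule suminf_sum[symmetric]) (use summable_abs_vmult_terms assms in auto)
  also have "\<dots> \<le> (\<Sum>k. 2 * C * \<bar>a k\<bar>)"
    by (intro suminf_le row_partial summable_sum summable_abs_vmult_terms summable_mult assms)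
  also have "\<dots> = 2 * C * (\<Sum>k. \<bar>a k\<bar>)"
    using assms by (rule suminf_mult)
  finally show "(\<Sum>j<N. \<bar>vmult q a j\<bar>) \<le> 2 * C * (\<Sum>k. \<bar>a k\<bar>)" .
qed auto

lemma vmult_diff:
  assumes "summable (\<lambda>k. \<bar>a k\<bar>)" and "summable (\<lambda>k. \<bar>b k\<bar>)"
  shows "vmult q a j - vmult q b j = vmult q (\<lambda>k. a k - b k) j"
  using suminf_diff[OF summable_rabs_cancel[OF summable_abs_vmult_terms[OF assms(1)]]
      summable_rabs_cancel[OF summable_abs_vmult_terms[OF assms(2)]]]
  by (simp add: vmult_def algebra_simps)

lemma vmult_nonneg_at_zero:
  assumes "summable (\<lambda>k. \<bar>a k\<bar>)" and "\<And>k. 0 \<le> a k" and "a j = 0"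
  shows "0 \<le> vmult q a j"
  unfolding vmult_def
proof (rule suminf_nonneg)
  show "summable (\<lambda>k. q k j * a k)"
    by (rule summable_rabs_cancel[OF summable_abs_vmult_terms[OF assms(1)]])
  show "0 \<le> q k j * a k" for k
    using offdiag_nonneg[of k j] assms(2,3) by (cases "k = j") auto
qed

lemma vmult_sums_zero:
  assumes "summable (\<lambda>k. \<bar>a k\<bar>)"
  shows "vmult q a sums 0"
proof -
  have row_abs: "(\<Sum>j. \<bar>q k j * a k\<bar>) = (\<Sum>j. \<bar>q k j\<bar>) * \<bar>a k\<bar>" for k
    using suminf_mult2[OF summable_abs_row[of k], of "\<bar>a k\<bar>"] by (simp add: abs_mult)
  have total: "summable (\<lambda>k. \<Sum>j. \<bar>q k j * a k\<bar>)"
  proof (rule summable_comparison_test[OF _ summable_mult[OF assms, of "2 * C"]])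
    have "norm (\<Sum>j. \<bar>q n j * a n\<bar>) \<le> 2 * C * \<bar>a n\<bar>" for n
      unfolding row_abs using abs_row_sum_le[of n] suminf_nonneg[OF summable_abs_row, of n]
      by (simp add: mult_right_mono)
    then show "\<exists>N. \<forall>n\<ge>N. norm (\<Sum>j. \<bar>q n j * a n\<bar>) \<le> 2 * C * \<bar>a n\<bar>" by blast
  qed
  have "(\<Sum>j. vmult q a j) = (\<Sum>k. \<Sum>j. q k j * a k)"
    unfolding vmult_def
    by (rule suminf_swap_abs_summable[OF _ total])
       (use summable_mult2[OF summable_abs_row] in \<open>simp add: abs_mult\<close>)
  also have "\<dots> = 0"
  proof -
    have "(\<Sum>j. q k j * a k) = (\<Sum>j. q k j) * a k" for k
      by (rule suminf_mult2[symmetric, OF sums_summable[OF rows_sum_zero]])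
    then show ?thesis by (simp add: sums_unique[OF rows_sum_zero, symmetric])
  qed
  finally show ?thesis
    using summable_rabs_cancel[OF conjunct1[OF vmult_l1_bound[OF assms]]]
    by (metis summable_sums)
qed

end

section \<open>The normalisation \<open>a / \<phi>(a)\<close>\<close>

definition inv_phi :: "(real \<Rightarrow> real) \<Rightarrow> (nat \<Rightarrow> real) \<Rightarrow> real" where
  "inv_phi f a = (if \<forall>l. a l = 0 then 0 else (\<Sum>l. a l) / (\<Sum>l. f (real l) * a l))"

lemma frac_eq_inv_phi: "frac f x i j = x i j * inv_phi f (x i)"
  by (simp add: frac_def phi_def inv_phi_def)

definition nonneg_summable :: "(nat \<Rightarrow> real) \<Rightarrow> bool" where
  "nonneg_summable a \<longleftrightarrow> (\<forall>l. 0 \<le> a l) \<and> summable a"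

lemma nonneg_summable_abs: "nonneg_summable a \<Longrightarrow> summable (\<lambda>l. \<bar>a l\<bar>)"
  by (simp add: nonneg_summable_def)

lemma nonneg_summable_abs_diff:
  assumes "nonneg_summable a" and "nonneg_summable b"
  shows "summable (\<lambda>l. \<bar>a l - b l\<bar>)"
proof (rule summable_comparison_test[OF _ summable_add[of a b]])
  have "\<bar>a n - b n\<bar> \<le> a n + b n" for n
    using assms by (simp add: nonneg_summable_def abs_le_iff)
  then show "\<exists>N. \<forall>n\<ge>N. norm \<bar>a n - b n\<bar> \<le> a n + b n" by simp
qed (use assms in \<open>simp_all add: nonneg_summable_def\<close>)

text \<open>Here \<open>m\<close> and \<open>g\<close> stand for \<open>\<Sum> a\<close> and \<open>\<Sum> f a\<close>, so that \<open>m / g = 1 / \<phi>(a)\<close>.\<close>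

lemma ratio_difference_bound:
  fixes ma mb ga gb D fl fu :: real
  assumes "0 < fl" and "0 < mb" and "mb \<le> ma" and "0 \<le> fu"
    and "fl * ma \<le> ga" and "fl * mb \<le> gb"
    and "\<bar>ma - mb\<bar> \<le> D" and "\<bar>ga - gb\<bar> \<le> fu * D"
  shows "ma / ga * D + mb * \<bar>ma / ga - mb / gb\<bar> \<le> (2 / fl + fu / fl\<^sup>2) * D"
proof -
  have D: "0 \<le> D" using assms(7) by linarith
  have "0 < fl * mb" using assms(1,2) by simp
  then have ga: "0 < ga" and gb: "0 < gb"
    using assms(1-3,5,6) mult_left_mono[OF assms(3), of fl] by linarith+
  have h1: "ma / ga \<le> 1 / fl" using assms(1,5) ga by (simp add: field_simps)
  have h2: "mb / ga \<le> 1 / fl" using h1 divide_right_mono[OF assms(3), of ga] ga by linarith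
  have h3: "mb / gb \<le> 1 / fl" using assms(1,6) gb by (simp add: field_simps)
  have num: "\<bar>(ma - mb) * gb - mb * (ga - gb)\<bar> \<le> D * gb + mb * (fu * D)"
  proof -
    have "\<bar>(ma - mb) * gb - mb * (ga - gb)\<bar> \<le> \<bar>ma - mb\<bar> * gb + mb * \<bar>ga - gb\<bar>"
      using gb assms(2) abs_triangle_ineq4[of "(ma - mb) * gb" "mb * (ga - gb)"]
      by (simp add: abs_mult)
    also have "\<dots> \<le> D * gb + mb * (fu * D)"
      using assms gb by (intro add_mono mult_right_mono mult_left_mono) auto
    finally show ?thesis .
  qed
  have "mb * \<bar>ma / ga - mb / gb\<bar> = mb * \<bar>(ma - mb) * gb - mb * (ga - gb)\<bar> / (ga * gb)"
    using ga gb by (simp add: field_simps abs_divide)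
  also have "\<dots> \<le> mb * (D * gb + mb * (fu * D)) / (ga * gb)"
    using num ga gb assms(2) by (intro divide_right_mono mult_left_mono) auto
  also have "\<dots> = D * (mb / ga) + fu * D * ((mb / ga) * (mb / gb))"
    using ga gb by (simp add: field_simps)
  also have "\<dots> \<le> D * (1 / fl) + fu * D * ((1 / fl) * (1 / fl))"
    using h2 h3 D assms(1,2,4) ga gb by (intro add_mono mult_left_mono mult_mono) auto
  finally have "mb * \<bar>ma / ga - mb / gb\<bar> \<le> D * (1 / fl) + fu * D * ((1 / fl) * (1 / fl))" .
  moreover have "ma / ga * D \<le> 1 / fl * D" using h1 D by (rule mult_right_mono)
  moreover have "(2 / fl + fu / fl\<^sup>2) * D = 1 / fl * D + (D * (1 / fl) + fu * D * ((1 / fl) * (1 / fl)))"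
    by (simp add: field_simps power2_eq_square)
  ultimately show ?thesis by linarith
qed

locale bounded_weight =
  fixes f :: "real \<Rightarrow> real" and fl fu :: real
  assumes fl_pos: "0 < fl" and f_lower: "\<And>x. fl \<le> f x" and f_upper: "\<And>x. f x \<le> fu"
begin

lemma fu_pos: "0 < fu"
  using fl_pos f_lower[of 0] f_upper[of 0] by linarith

lemma f_nonneg: "0 \<le> f x"
  using fl_pos f_lower[of x] by linarith

lemma abs_f_le: "\<bar>f x\<bar> \<le> fu"
  using f_nonneg f_upper by simp

lemma summable_weighted:
  assumes "summable (\<lambda>l. \<bar>a l\<bar>)"
  shows "summable (\<lambda>l. \<bar>f (real l) * a l\<bar>)"
  by (rule summable_comparison_test[OF _ summable_mult[OF assms, of fu]])
     (auto simp: abs_mult intro!: exI[of _ 0] mult_right_mono abs_f_le)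

lemma weighted_sum_bounds:
  assumes "nonneg_summable a"
  shows "fl * (\<Sum>l. a l) \<le> (\<Sum>l. f (real l) * a l)" and "(\<Sum>l. f (real l) * a l) \<le> fu * (\<Sum>l. a l)"
proof -
  have a: "summable a" "\<And>l. 0 \<le> a l" using assms by (auto simp: nonneg_summable_def)
  have fa: "summable (\<lambda>l. f (real l) * a l)"
    using summable_rabs_cancel[OF summable_weighted[OF nonneg_summable_abs[OF assms]]] .
  have "fl * (\<Sum>l. a l) = (\<Sum>l. fl * a l)" by (rule suminf_mult[symmetric, OF a(1)])
  also have "\<dots> \<le> (\<Sum>l. f (real l) * a l)"
    by (intro suminf_le summable_mult a fa mult_right_mono f_lower)
  finally show "fl * (\<Sum>l. a l) \<le> (\<Sum>l. f (real l) * a l)" .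
  have "(\<Sum>l. f (real l) * a l) \<le> (\<Sum>l. fu * a l)"
    by (intro suminf_le summable_mult a fa mult_right_mono f_upper)
  also have "\<dots> = fu * (\<Sum>l. a l)" by (rule suminf_mult[OF a(1)])
  finally show "(\<Sum>l. f (real l) * a l) \<le> fu * (\<Sum>l. a l)" .
qed

lemma weighted_sum_pos:
  assumes "nonneg_summable a" and "\<not> (\<forall>l. a l = 0)"
  shows "0 < (\<Sum>l. a l)" and "0 < (\<Sum>l. f (real l) * a l)"
proof -
  show m: "0 < (\<Sum>l. a l)"
    using assms suminf_pos_iff[of a] by (auto simp: nonneg_summable_def order_less_le)
  show "0 < (\<Sum>l. f (real l) * a l)"
    using weighted_sum_bounds(1)[OF assms(1)] mult_pos_pos[OF fl_pos m] by linarith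
qed

lemma inv_phi_bounds:
  assumes "nonneg_summable a"
  shows "0 \<le> inv_phi f a" and "inv_phi f a \<le> 1 / fl"
proof -
  have "0 \<le> inv_phi f a \<and> inv_phi f a \<le> 1 / fl"
  proof (cases "\<forall>l. a l = 0")
    case False
    with weighted_sum_pos[OF assms] weighted_sum_bounds(1)[OF assms] fl_pos show ?thesis
      by (simp add: inv_phi_def field_simps)
  qed (use fl_pos in \<open>simp add: inv_phi_def\<close>)
  then show "0 \<le> inv_phi f a" "inv_phi f a \<le> 1 / fl" by auto
qed

lemma weighted_inv_phi_sums:
  assumes "nonneg_summable a"
  shows "(\<lambda>j. f (real j) * (a j * inv_phi f a)) sums (\<Sum>l. a l)"
proof (cases "\<forall>l. a l = 0")
  case False
  have "(\<lambda>j. f (real j) * a j * inv_phi f a) sums ((\<Sum>l. f (real l) * a l) * inv_phi f a)"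
    using summable_rabs_cancel[OF summable_weighted[OF nonneg_summable_abs[OF assms]]]
    by (intro sums_mult2 summable_sums)
  then show ?thesis
    using weighted_sum_pos(2)[OF assms False] False by (simp add: inv_phi_def mult.assoc)
qed (simp add: inv_phi_def)

lemma weighted_sum_diff_le:
  assumes "nonneg_summable a" and "nonneg_summable b"
  shows "\<bar>(\<Sum>l. f (real l) * a l) - (\<Sum>l. f (real l) * b l)\<bar> \<le> fu * (\<Sum>l. \<bar>a l - b l\<bar>)"
proof -
  have d: "summable (\<lambda>l. \<bar>a l - b l\<bar>)" by (rule nonneg_summable_abs_diff[OF assms])
  have diff: "(\<Sum>l. f (real l) * a l) - (\<Sum>l. f (real l) * b l) = (\<Sum>l. f (real l) * (a l - b l))"
    using suminf_diff[OF summable_rabs_cancel[OF summable_weighted[OF nonneg_summable_abs[OF assms(1)]]]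
        summable_rabs_cancel[OF summable_weighted[OF nonneg_summable_abs[OF assms(2)]]]]
    by (simp add: algebra_simps)
  have fd: "summable (\<lambda>l. \<bar>f (real l) * (a l - b l)\<bar>)"
    using summable_weighted[of "\<lambda>l. a l - b l"] d by simp
  have "\<bar>\<Sum>l. f (real l) * (a l - b l)\<bar> \<le> (\<Sum>l. \<bar>f (real l) * (a l - b l)\<bar>)"
    by (rule summable_rabs[OF fd])
  also have "\<dots> \<le> (\<Sum>l. fu * \<bar>a l - b l\<bar>)"
    by (intro suminf_le fd summable_mult d) (simp add: abs_mult mult_right_mono abs_f_le)
  also have "\<dots> = fu * (\<Sum>l. \<bar>a l - b l\<bar>)" by (rule suminf_mult[OF d])
  finally show ?thesis unfolding diff .
qed

definition lip_frac :: real where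
  "lip_frac = 2 / fl + fu / fl\<^sup>2"

lemma inv_fl_le_lip_frac: "1 / fl \<le> lip_frac"
proof -
  have "1 / fl \<le> 2 / fl" using fl_pos by (simp add: divide_right_mono)
  moreover have "0 \<le> fu / fl\<^sup>2" using fl_pos fu_pos by simp
  ultimately show ?thesis by (simp add: lip_frac_def)
qed

lemma lip_frac_nonneg: "0 \<le> lip_frac"
  using inv_fl_le_lip_frac fl_pos by (meson divide_pos_pos order_trans less_imp_le zero_less_one)

lemma frac_diff_sum_le:
  assumes a: "nonneg_summable a" and b: "nonneg_summable b"
  shows "summable (\<lambda>j. \<bar>a j * inv_phi f a - b j * inv_phi f b\<bar>) \<and>
    (\<Sum>j. \<bar>a j * inv_phi f a - b j * inv_phi f b\<bar>)
      \<le> inv_phi f a * (\<Sum>j. \<bar>a j - b j\<bar>) + (\<Sum>l. b l) * \<bar>inv_phi f a - inv_phi f b\<bar>"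
proof -
  define dh where "dh = \<bar>inv_phi f a - inv_phi f b\<bar>"
  have sD: "summable (\<lambda>j. \<bar>a j - b j\<bar>)" by (rule nonneg_summable_abs_diff[OF a b])
  have sb: "summable b" and b0: "\<And>j. 0 \<le> b j" using b by (auto simp: nonneg_summable_def)
  have pointwise: "\<bar>a j * inv_phi f a - b j * inv_phi f b\<bar> \<le> \<bar>a j - b j\<bar> * inv_phi f a + b j * dh" for j
  proof -
    have "a j * inv_phi f a - b j * inv_phi f b = (a j - b j) * inv_phi f a + b j * (inv_phi f a - inv_phi f b)"
      by (simp add: algebra_simps)
    then show ?thesis
      using abs_triangle_ineq[of "(a j - b j) * inv_phi f a" "b j * (inv_phi f a - inv_phi f b)"]
        inv_phi_bounds(1)[OF a] b0[of j]
      by (simp add: abs_mult dh_def)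
  qed
  have sR: "summable (\<lambda>j. \<bar>a j - b j\<bar> * inv_phi f a + b j * dh)"
    by (intro summable_add summable_mult2 sD sb)
  have sL: "summable (\<lambda>j. \<bar>a j * inv_phi f a - b j * inv_phi f b\<bar>)"
    by (rule summable_comparison_test[OF _ sR]) (use pointwise in auto)
  have "(\<Sum>j. \<bar>a j * inv_phi f a - b j * inv_phi f b\<bar>) \<le> (\<Sum>j. \<bar>a j - b j\<bar> * inv_phi f a + b j * dh)"
    by (rule suminf_le[OF pointwise sL sR])
  also have "\<dots> = inv_phi f a * (\<Sum>j. \<bar>a j - b j\<bar>) + (\<Sum>l. b l) * dh"
    using suminf_add[OF summable_mult2[OF sD] summable_mult2[OF sb]] suminf_mult2[OF sD] suminf_mult2[OF sb]
    by (simp add: mult.commute)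
  finally show ?thesis using sL by (simp add: dh_def)
qed

text \<open>Heaviness of \<open>a\<close> gives \<open>\<Sum> b / \<Sum> f a \<le> 1 / fl\<close>, which the second term needs.\<close>

lemma inv_phi_diff_bound:
  assumes a: "nonneg_summable a" and b: "nonneg_summable b" and heavier: "(\<Sum>l. b l) \<le> (\<Sum>l. a l)"
  shows "inv_phi f a * (\<Sum>j. \<bar>a j - b j\<bar>) + (\<Sum>l. b l) * \<bar>inv_phi f a - inv_phi f b\<bar>
    \<le> lip_frac * (\<Sum>j. \<bar>a j - b j\<bar>)"
proof (cases "\<forall>l. b l = 0")
  case True
  have "0 \<le> (\<Sum>j. \<bar>a j - b j\<bar>)"
    using nonneg_summable_abs_diff[OF a b] by (intro suminf_nonneg) auto
  then show ?thesis
    using True inv_phi_bounds(2)[OF a] inv_fl_le_lip_frac by (simp add: mult_right_mono)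
next
  case False
  define D where "D = (\<Sum>j. \<bar>a j - b j\<bar>)"
  have anz: "\<not> (\<forall>l. a l = 0)"
  proof
    assume "\<forall>l. a l = 0"
    then have "(\<Sum>l. a l) = 0" by simp
    then show False using weighted_sum_pos(1)[OF b False] heavier by linarith
  qed
  have "\<bar>(\<Sum>l. a l) - (\<Sum>l. b l)\<bar> \<le> D"
    using summable_rabs[OF nonneg_summable_abs_diff[OF a b]] a b
      suminf_diff[of a b] by (simp add: D_def nonneg_summable_def)
  from ratio_difference_bound[OF fl_pos weighted_sum_pos(1)[OF b False] heavier less_imp_le[OF fu_pos]
      weighted_sum_bounds(1)[OF a] weighted_sum_bounds(1)[OF b] this weighted_sum_diff_le[OF a b, folded D_def]]
  show ?thesis by (simp add: inv_phi_def anz False D_def lip_frac_def mult.commute)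
qed

lemma frac_lipschitz:
  assumes a: "nonneg_summable a" and b: "nonneg_summable b"
  shows "summable (\<lambda>j. \<bar>a j * inv_phi f a - b j * inv_phi f b\<bar>) \<and>
         (\<Sum>j. \<bar>a j * inv_phi f a - b j * inv_phi f b\<bar>) \<le> lip_frac * (\<Sum>j. \<bar>a j - b j\<bar>)"
proof (cases "(\<Sum>l. b l) \<le> (\<Sum>l. a l)")
  case True
  then show ?thesis
    using frac_diff_sum_le[OF a b] inv_phi_diff_bound[OF a b] by linarith
next
  case False
  then show ?thesis
    using frac_diff_sum_le[OF b a] inv_phi_diff_bound[OF b a]
    by (simp add: abs_minus_commute)
qed

end

abbreviation fam_diff :: "fam \<Rightarrow> fam \<Rightarrow> fam" where
  "fam_diff u v \<equiv> \<lambda>i j. u i j - v i j"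

lemma fam_norm_le_partial_bound:
  assumes "\<And>N. (\<Sum>i\<le>M. \<Sum>j<N. \<bar>u i j\<bar>) \<le> B"
  shows "summable_fam M u \<and> fam_norm M u \<le> B"
proof -
  have level: "(\<Sum>j<N. \<bar>u i j\<bar>) \<le> B" if "i \<le> M" for i N
    using member_le_sum[of i "{..M}" "\<lambda>i. \<Sum>j<N. \<bar>u i j\<bar>"] assms[of N] that by auto
  have s: "summable (\<lambda>j. \<bar>u i j\<bar>)" if "i \<le> M" for i
    using nonneg_bounded_partial_sums[of "\<lambda>j. \<bar>u i j\<bar>" B] level[OF that] by auto
  have "(\<lambda>N. \<Sum>i\<le>M. \<Sum>j<N. \<bar>u i j\<bar>) \<longlonglongrightarrow> (\<Sum>i\<le>M. \<Sum>j. \<bar>u i j\<bar>)"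
    by (intro tendsto_sum summable_LIMSEQ s) auto
  then have "(\<Sum>i\<le>M. \<Sum>j. \<bar>u i j\<bar>) \<le> B"
    by (rule LIMSEQ_le_const2) (use assms in auto)
  then show ?thesis using s by (simp add: summable_fam_def fam_norm_def)
qed

lemma partial_sum_le_fam_norm:
  "summable_fam M u \<Longrightarrow> (\<Sum>i\<le>M. \<Sum>j<N. \<bar>u i j\<bar>) \<le> fam_norm M u"
  unfolding fam_norm_def summable_fam_def by (intro sum_mono sum_le_suminf) auto

lemma level_norm_le_fam_norm:
  assumes "summable_fam M u" and "i \<le> M"
  shows "(\<Sum>j. \<bar>u i j\<bar>) \<le> fam_norm M u"
  unfolding fam_norm_def
  by (rule member_le_sum) (use assms in \<open>auto simp: summable_fam_def intro: suminf_nonneg\<close>)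

lemma abs_le_fam_norm:
  assumes "summable_fam M u" and "i \<le> M"
  shows "\<bar>u i j\<bar> \<le> fam_norm M u"
  using sum_le_suminf[of "\<lambda>j. \<bar>u i j\<bar>" "{j}"] level_norm_le_fam_norm[OF assms] assms
  by (simp add: summable_fam_def)

lemma fam_norm_nonneg: "summable_fam M u \<Longrightarrow> 0 \<le> fam_norm M u"
  unfolding fam_norm_def summable_fam_def by (auto intro!: sum_nonneg suminf_nonneg)

lemma summable_fam_diff:
  assumes "summable_fam M u" and "summable_fam M v"
  shows "summable_fam M (fam_diff u v)"
  unfolding summable_fam_def
proof (intro allI impI)
  fix i assume "i \<le> M"
  then have "summable (\<lambda>j. \<bar>u i j\<bar> + \<bar>v i j\<bar>)"
    using assms by (intro summable_add) (auto simp: summable_fam_def)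
  then show "summable (\<lambda>j. \<bar>u i j - v i j\<bar>)"
    by (rule summable_comparison_test[rotated]) auto
qed

lemma summable_fam_add:
  assumes "summable_fam M u" and "summable_fam M v"
  shows "summable_fam M (\<lambda>i j. u i j + v i j)"
  using summable_fam_diff[OF assms(1), of "\<lambda>i j. - v i j"] assms(2)
  by (simp add: summable_fam_def)

lemma fam_norm_triangle:
  assumes "summable_fam M u" and "summable_fam M v" and "summable_fam M w"
  shows "fam_norm M (fam_diff u w) \<le> fam_norm M (fam_diff u v) + fam_norm M (fam_diff v w)"
proof -
  have "(\<Sum>i\<le>M. \<Sum>j<N. \<bar>u i j - w i j\<bar>) \<le> fam_norm M (fam_diff u v) + fam_norm M (fam_diff v w)" for N
  proof -
    have "(\<Sum>i\<le>M. \<Sum>j<N. \<bar>u i j - w i j\<bar>)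
        \<le> (\<Sum>i\<le>M. \<Sum>j<N. \<bar>u i j - v i j\<bar>) + (\<Sum>i\<le>M. \<Sum>j<N. \<bar>v i j - w i j\<bar>)"
      by (simp add: sum.distrib[symmetric] sum_mono)
    also have "\<dots> \<le> fam_norm M (fam_diff u v) + fam_norm M (fam_diff v w)"
      using partial_sum_le_fam_norm[OF summable_fam_diff[OF assms(1,2)]]
        partial_sum_le_fam_norm[OF summable_fam_diff[OF assms(2,3)]]
      by (intro add_mono)
    finally show ?thesis .
  qed
  from fam_norm_le_partial_bound[where u="fam_diff u w", OF this] show ?thesis by simp
qed

lemma fam_norm_diff_le:
  assumes "summable_fam M u" and "summable_fam M v"
  shows "fam_norm M (fam_diff u v) \<le> fam_norm M u + fam_norm M v"
proof -
  have "summable_fam M (\<lambda>i j. 0)" by (simp add: summable_fam_def)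
  from fam_norm_triangle[OF assms(1) this assms(2)] show ?thesis
    by (simp add: fam_norm_def)
qed

lemma fam_norm_diff_commute: "fam_norm M (fam_diff u v) = fam_norm M (fam_diff v u)"
  by (simp add: fam_norm_def abs_minus_commute)

lemma fam_norm_cong: "(\<And>i j. i \<le> M \<Longrightarrow> u i j = v i j) \<Longrightarrow> fam_norm M u = fam_norm M v"
  unfolding fam_norm_def by (intro sum.cong refl) auto

lemma P0_sums: "(\<lambda>j. P0 x0 y0 i j) sums (if i = x0 then 1 else 0)"
proof -
  have "(\<lambda>j. P0 x0 y0 i j) = (\<lambda>j. if j = y0 then (if i = x0 then 1 else 0) else 0 :: real)"
    by (auto simp: P0_def)
  then show ?thesis using sums_single[of y0 "\<lambda>_. if i = x0 then 1 else 0::real"] by simp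
qed

lemma abs_P0: "\<bar>P0 x0 y0 i j\<bar> = P0 x0 y0 i j"
  by (simp add: P0_def)

lemma summable_fam_P0: "summable_fam M (P0 x0 y0)"
  unfolding summable_fam_def abs_P0 using P0_sums sums_summable by blast

lemma fam_norm_P0: "x0 \<le> M \<Longrightarrow> fam_norm M (P0 x0 y0) = 1"
  unfolding fam_norm_def abs_P0 sums_unique[OF P0_sums, symmetric] by simp

definition pos_part :: "fam \<Rightarrow> fam" where
  "pos_part x = (\<lambda>i j. max (x i j) 0)"

lemma nonneg_summable_pos_part:
  assumes "summable_fam M x" and "i \<le> M"
  shows "nonneg_summable (pos_part x i)"
proof -
  have "summable (\<lambda>j. \<bar>x i j\<bar>)" using assms by (simp add: summable_fam_def)
  then have "summable (\<lambda>j. max (x i j) 0)"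
    by (rule summable_comparison_test[rotated]) (simp add: max_def)
  then show ?thesis by (simp add: nonneg_summable_def pos_part_def)
qed

lemma pos_part_level_dist_le:
  assumes "summable_fam M x" and "summable_fam M y" and "i \<le> M"
  shows "(\<Sum>j. \<bar>pos_part x i j - pos_part y i j\<bar>) \<le> (\<Sum>j. \<bar>x i j - y i j\<bar>)"
proof (rule suminf_le)
  show "summable (\<lambda>j. \<bar>pos_part x i j - pos_part y i j\<bar>)"
    by (rule nonneg_summable_abs_diff[OF nonneg_summable_pos_part[OF assms(1,3)] nonneg_summable_pos_part[OF assms(2,3)]])
  show "summable (\<lambda>j. \<bar>x i j - y i j\<bar>)"
    using summable_fam_diff[OF assms(1,2)] assms(3) by (simp add: summable_fam_def)
  show "\<bar>pos_part x i j - pos_part y i j\<bar> \<le> \<bar>x i j - y i j\<bar>" for j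
    by (simp add: pos_part_def max_def abs_if)
qed

text \<open>Approximate \<open>h\<close> from the right by the step functions \<open>s \<mapsto> h(\<lceil>2\<^sup>n s\<rceil> / 2\<^sup>n)\<close>.\<close>

lemma right_continuous_borel_measurable:
  fixes h :: "real \<Rightarrow> real"
  assumes rc: "\<And>t. 0 \<le> t \<Longrightarrow> continuous (at_right t) h"
  shows "h \<in> borel_measurable (lebesgue_on {0..T})"
proof -
  define r where "r n s = real_of_int \<lceil>s * 2^n\<rceil> / 2^n" for n :: nat and s :: real
  have step_meas: "(\<lambda>s. h (max (r n s) 0)) \<in> borel_measurable (lebesgue_on {0..T})" for n
  proof -
    have ceil: "(\<lambda>s::real. \<lceil>s * 2^n\<rceil>) \<in> measurable borel (count_space UNIV)"
      by measurable
    have "(\<lambda>s. h (max (r n s) 0)) \<in> borel_measurable borel"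
      unfolding r_def by (rule measurable_compose_countable[where g="\<lambda>s. \<lceil>s * 2^n\<rceil>"
          and f="\<lambda>i s. h (max (real_of_int i / 2^n) 0)"]) (auto intro: ceil)
    then show ?thesis by (intro measurable_restrict_space1 measurable_completion) simp
  qed
  have r_ge: "s \<le> r n s" and r_le: "r n s \<le> s + (1/2)^n" for n s
    using ceiling_correct[of "s * 2^n"] by (auto simp: r_def field_simps power_one_over)
  have "(\<lambda>n. h (max (r n s) 0)) \<longlonglongrightarrow> h s" if "s \<in> {0..T}" for s
  proof -
    have upper: "(\<lambda>n. s + (1/2::real)^n) \<longlonglongrightarrow> s"
      using tendsto_add[OF tendsto_const[of s] LIMSEQ_power_zero[of "1/2::real"]] by simp
    have r_lim: "(\<lambda>n. r n s) \<longlonglongrightarrow> s"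
      by (rule tendsto_sandwich[OF _ _ tendsto_const upper]) (simp_all add: r_ge r_le)
    have "continuous (at s within {s..}) h"
      using rc that by (simp add: at_within_Ici_at_right)
    from continuous_within_tendsto_compose'[OF this _ r_lim]
    have "(\<lambda>n. h (r n s)) \<longlonglongrightarrow> h s" by (simp add: r_ge)
    moreover have "max (r n s) 0 = r n s" for n using r_ge[of s n] that by simp
    ultimately show ?thesis by simp
  qed
  then show ?thesis by (intro borel_measurable_LIMSEQ_real[OF _ step_meas]) simp
qed

lemma eventually_le_succ_at_within_nonneg:
  fixes t :: real
  shows "eventually (\<lambda>s. s \<in> {0..t + 1}) (at t within {0..})"
proof -
  have "eventually (\<lambda>s. s < t + 1) (at t within {0..})"
    by (rule order_tendstoD(2)[OF tendsto_ident_at]) simp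
  moreover have "eventually (\<lambda>s. s \<in> {0..}) (at t within {0..})"
    by (simp add: eventually_at_filter)
  ultimately show ?thesis by eventually_elim auto
qed

lemma has_integral_power_scaled:
  fixes c L t :: real
  assumes "0 \<le> t"
  shows "((\<lambda>s. c * (L * (L * s) ^ n / fact n)) has_integral c * ((L * t) ^ Suc n / fact (Suc n))) {0..t}"
proof -
  have deriv: "((\<lambda>s. c * ((L * s) ^ Suc n / fact (Suc n))) has_real_derivative c * (L * (L * s) ^ n / fact n)) (at s)" for s
  proof -
    define K where "K = c * L ^ Suc n / fact (Suc n)"
    have "((\<lambda>s. K * s ^ Suc n) has_real_derivative K * (real (Suc n) * s ^ n)) (at s)"
      by (intro DERIV_cmult) (simp add: DERIV_pow[of "Suc n" s, simplified])
    moreover have "(\<lambda>s. K * s ^ Suc n) = (\<lambda>s. c * ((L * s) ^ Suc n / fact (Suc n)))"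
      by (simp add: K_def power_mult_distrib fun_eq_iff)
    moreover have "K * (real (Suc n) * s ^ n) = c * (L * (L * s) ^ n / fact n)"
      unfolding K_def by (simp add: power_mult_distrib fact_Suc field_simps del: of_nat_Suc)
    ultimately show ?thesis by simp
  qed
  have "((\<lambda>s. c * (L * (L * s) ^ n / fact n)) has_integral
      c * ((L * t) ^ Suc n / fact (Suc n)) - c * ((L * 0) ^ Suc n / fact (Suc n))) {0..t}"
  proof (rule fundamental_theorem_of_calculus[OF assms])
    fix x assume "x \<in> {0..t}"
    show "((\<lambda>s. c * ((L * s) ^ Suc n / fact (Suc n))) has_vector_derivative c * (L * (L * x) ^ n / fact n))
        (at x within {0..t})"
      using has_vector_derivative_at_within[OF deriv[of x, unfolded has_real_derivative_iff_has_vector_derivative]] .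
  qed
  then show ?thesis by simp
qed

lemma integral_abs_sum_le:
  fixes g :: "'k \<Rightarrow> real \<Rightarrow> real"
  assumes F: "finite F" and g: "\<And>k. k \<in> F \<Longrightarrow> g k absolutely_integrable_on S"
    and h: "h integrable_on S" and le: "\<And>s. s \<in> S \<Longrightarrow> (\<Sum>k\<in>F. \<bar>g k s\<bar>) \<le> h s"
  shows "(\<Sum>k\<in>F. \<bar>integral S (g k)\<bar>) \<le> integral S h"
proof -
  have int: "g k integrable_on S" and abs_int: "(\<lambda>s. \<bar>g k s\<bar>) integrable_on S" if "k \<in> F" for k
    using g[OF that] by (auto simp: absolutely_integrable_on_def)
  have "(\<Sum>k\<in>F. \<bar>integral S (g k)\<bar>) \<le> (\<Sum>k\<in>F. integral S (\<lambda>s. \<bar>g k s\<bar>))"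
    using integral_norm_bound_integral[OF int abs_int] by (intro sum_mono) simp
  also have "\<dots> = integral S (\<lambda>s. \<Sum>k\<in>F. \<bar>g k s\<bar>)"
    by (rule integral_sum[symmetric, OF F abs_int])
  also have "\<dots> \<le> integral S h"
    by (rule integral_le[OF integrable_sum[OF F abs_int] h le])
  finally show ?thesis .
qed

lemma nonneg_if_increasing_where_nonpos:
  fixes u :: "real \<Rightarrow> real"
  assumes cont: "continuous_on {0..t} u" and t: "0 \<le> t" and u0: "0 \<le> u 0"
    and incr: "\<And>a. a \<in> {0..t} \<Longrightarrow> (\<And>s. s \<in> {a..t} \<Longrightarrow> u s \<le> 0) \<Longrightarrow> u a \<le> u t"
  shows "0 \<le> u t"
proof (rule ccontr)
  assume neg: "\<not> 0 \<le> u t"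
  define S where "S = {s \<in> {0..t}. 0 \<le> u s}"
  have "closed S"
    unfolding S_def by (intro continuous_on_closed_Collect_le continuous_on_const cont) auto
  moreover have "bdd_above S" and "S \<noteq> {}"
    using t u0 by (auto simp: S_def intro!: bdd_aboveI[of _ t])
  ultimately have aS: "Sup S \<in> S" using closed_contains_Sup by blast
  define a where "a = Sup S"
  have a: "a \<in> {0..t}" "0 \<le> u a" "a < t"
    using aS neg by (auto simp: S_def a_def order_less_le)
  have after: "u s < 0" if "a < s" "s \<le> t" for s
    using cSup_upper[OF _ \<open>bdd_above S\<close>, of s] that a by (force simp: S_def a_def)
  have "u a \<le> 0"
  proof (rule ccontr)
    assume "\<not> u a \<le> 0"
    then have "eventually (\<lambda>s. 0 < u s) (at a within {0..t})"
      using cont a(1) by (intro order_tendstoD(1)) (auto simp: continuous_on_def)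
    then obtain d where d: "0 < d" "\<And>s. s \<in> {0..t} \<Longrightarrow> s \<noteq> a \<Longrightarrow> dist s a < d \<Longrightarrow> 0 < u s"
      unfolding eventually_at by blast
    define s where "s = min (a + d / 2) t"
    have s: "a < s" "s \<le> t" "s - a < d" using d a by (auto simp: s_def)
    then have "0 < u s" using d(2)[of s] a(1) by (auto simp: dist_real_def)
    then show False using after[OF s(1,2)] by simp
  qed
  then have "u a \<le> u t"
    using after by (intro incr a(1)) (metis atLeastAtMost_iff order_le_less less_imp_le)
  then show False using a(2) neg by linarith
qed

section \<open>The truncated vector field\<close>

locale fokker_planck = bounded_weight f fl fu for f fl fu +
  fixes M :: nat and lam :: "real \<Rightarrow> nat \<Rightarrow> real" and mu :: "nat \<Rightarrow> nat \<Rightarrow> nat \<Rightarrow> real"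
    and C :: real and x0 y0 :: nat
  assumes M_pos: "1 \<le> M" and x0_le: "x0 \<le> M"
    and lam_nonneg: "\<And>t k. 0 \<le> t \<Longrightarrow> k \<le> M \<Longrightarrow> 0 \<le> lam t k"
    and lam_right_cont: "\<And>k t. k \<le> M \<Longrightarrow> 0 \<le> t \<Longrightarrow> continuous (at_right t) (\<lambda>s. lam s k)"
    and lam_bounded: "\<And>T. 0 < T \<Longrightarrow> \<exists>Lm. \<forall>t\<in>{0..T}. \<forall>k\<le>M. \<bar>lam t k\<bar> \<le> Lm"
    and mu_intensity: "\<And>k. k \<le> M \<Longrightarrow> intensity_matrix (mu k) C"
begin

lemma C_nonneg: "0 \<le> C"
  using intensity_matrix.C_nonneg[OF mu_intensity[of 0]] by simp

definition rate_bound :: "real \<Rightarrow> real \<Rightarrow> bool" where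
  "rate_bound T Lm \<longleftrightarrow> 0 \<le> Lm \<and> (\<forall>s\<in>{0..T}. \<forall>k\<le>M. 0 \<le> lam s k \<and> lam s k \<le> Lm)"

lemma rate_bound_exists: "\<exists>Lm. rate_bound T Lm"
proof -
  have "0 < max T 1" by simp
  then obtain Lm where Lm: "\<forall>t\<in>{0..max T 1}. \<forall>k\<le>M. \<bar>lam t k\<bar> \<le> Lm"
    using lam_bounded by blast
  have "0 \<le> lam s k \<and> lam s k \<le> max Lm 0" if "s \<in> {0..T}" and "k \<le> M" for s k
  proof -
    have "\<bar>lam s k\<bar> \<le> Lm" using Lm that by auto
    moreover have "0 \<le> lam s k" using lam_nonneg that by auto
    ultimately show ?thesis by simp
  qed
  then have "rate_bound T (max Lm 0)" by (simp add: rate_bound_def)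
  then show ?thesis ..
qed

lemma rate_boundD:
  "rate_bound T Lm \<Longrightarrow> s \<in> {0..T} \<Longrightarrow> k \<le> M \<Longrightarrow> 0 \<le> lam s k \<and> lam s k \<le> Lm"
  by (simp add: rate_bound_def)

lemma rate_bound_mono: "rate_bound T Lm \<Longrightarrow> t \<le> T \<Longrightarrow> rate_bound t Lm"
  by (auto simp: rate_bound_def)

definition Phi :: "real \<Rightarrow> fam \<Rightarrow> fam" where
  "Phi s x = Psi M lam f mu s (pos_part x)"

lemma Psi_eq: "Psi M lam f mu s y i j = vmult (mu i) (y i) j
   + (if 1 \<le> i then lam s (i - 1) * f (real j) * frac f y (i - 1) j else 0)
   - (if i \<le> M - 1 then lam s i * f (real j) * frac f y i j else 0)"
  by (simp add: Psi_def vmult_def)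

lemma Psi_cong_levels:
  assumes "\<And>k j. k \<le> M \<Longrightarrow> y k j = z k j" and "i \<le> M"
  shows "Psi M lam f mu s y i j = Psi M lam f mu s z i j"
proof -
  have "y i = z i" and "y (i - 1) = z (i - 1)" using assms by auto
  then show ?thesis by (simp add: Psi_eq frac_eq_inv_phi)
qed

lemma Phi_eq_Psi:
  assumes "nonneg_fam M y" and "i \<le> M"
  shows "Phi s y i j = Psi M lam f mu s y i j"
  unfolding Phi_def
  by (rule Psi_cong_levels[OF _ assms(2)]) (use assms(1) in \<open>auto simp: pos_part_def nonneg_fam_def\<close>)

lemma Phi_zero: "Phi s (\<lambda>i j. 0) = (\<lambda>i j. 0)"
  by (simp add: fun_eq_iff Phi_def Psi_eq pos_part_def vmult_def frac_def)

lemma vmult_pos_part_lipschitz: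
  assumes "summable_fam M x" and "summable_fam M y" and i: "i \<le> M"
  shows "summable (\<lambda>j. \<bar>vmult (mu i) (pos_part x i) j - vmult (mu i) (pos_part y i) j\<bar>) \<and>
    (\<Sum>j. \<bar>vmult (mu i) (pos_part x i) j - vmult (mu i) (pos_part y i) j\<bar>) \<le> 2 * C * (\<Sum>j. \<bar>x i j - y i j\<bar>)"
proof -
  interpret intensity_matrix "mu i" C by (rule mu_intensity[OF i])
  have px: "nonneg_summable (pos_part x i)" and py: "nonneg_summable (pos_part y i)"
    using nonneg_summable_pos_part assms by blast+
  have "summable (\<lambda>j. \<bar>vmult (mu i) (pos_part x i) j - vmult (mu i) (pos_part y i) j\<bar>) \<and>
    (\<Sum>j. \<bar>vmult (mu i) (pos_part x i) j - vmult (mu i) (pos_part y i) j\<bar>)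
      \<le> 2 * C * (\<Sum>j. \<bar>pos_part x i j - pos_part y i j\<bar>)"
    using vmult_l1_bound[OF nonneg_summable_abs_diff[OF px py]]
      vmult_diff[OF nonneg_summable_abs[OF px] nonneg_summable_abs[OF py]]
    by simp
  then show ?thesis
    using pos_part_level_dist_le[OF assms] mult_left_mono[of _ _ "2 * C"] C_nonneg by fastforce
qed

lemma frac_pos_part_lipschitz:
  assumes "summable_fam M x" and "summable_fam M y" and "i \<le> M"
  shows "summable (\<lambda>j. \<bar>frac f (pos_part x) i j - frac f (pos_part y) i j\<bar>) \<and>
    (\<Sum>j. \<bar>frac f (pos_part x) i j - frac f (pos_part y) i j\<bar>) \<le> lip_frac * (\<Sum>j. \<bar>x i j - y i j\<bar>)"
  using frac_lipschitz[OF nonneg_summable_pos_part[OF assms(1,3)] nonneg_summable_pos_part[OF assms(2,3)]]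
    pos_part_level_dist_le[OF assms] mult_left_mono[of _ _ lip_frac] lip_frac_nonneg
  by (fastforce simp: frac_eq_inv_phi)

lemma jump_term_le:
  assumes "0 \<le> c" and "c \<le> Lm"
  shows "\<bar>c * f (real j) * z\<bar> \<le> Lm * fu * \<bar>z\<bar>"
  using assms f_nonneg f_upper by (simp add: abs_mult mult_mono mult_right_mono)

lemma Phi_dist_le_pointwise:
  assumes i: "i \<le> M" and lam: "\<And>k. k \<le> M \<Longrightarrow> 0 \<le> lam s k \<and> lam s k \<le> Lm"
  shows "\<bar>Phi s x i j - Phi s y i j\<bar> \<le> \<bar>vmult (mu i) (pos_part x i) j - vmult (mu i) (pos_part y i) j\<bar>
    + Lm * fu * ((if 1 \<le> i then \<bar>frac f (pos_part x) (i - 1) j - frac f (pos_part y) (i - 1) j\<bar> else 0)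
      + \<bar>frac f (pos_part x) i j - frac f (pos_part y) i j\<bar>)"
proof -
  have "\<bar>(if 1 \<le> i then lam s (i - 1) * f (real j) * (frac f (pos_part x) (i - 1) j - frac f (pos_part y) (i - 1) j) else 0)\<bar>
      \<le> Lm * fu * (if 1 \<le> i then \<bar>frac f (pos_part x) (i - 1) j - frac f (pos_part y) (i - 1) j\<bar> else 0)"
    using jump_term_le lam[of "i - 1"] i by simp
  moreover have "\<bar>(if i \<le> M - 1 then lam s i * f (real j) * (frac f (pos_part x) i j - frac f (pos_part y) i j) else 0)\<bar>
      \<le> Lm * fu * \<bar>frac f (pos_part x) i j - frac f (pos_part y) i j\<bar>"
    using jump_term_le lam[of i] i lam[of 0] fu_pos by simp
  moreover have "Phi s x i j - Phi s y i j
      = (vmult (mu i) (pos_part x i) j - vmult (mu i) (pos_part y i) j)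
      + (if 1 \<le> i then lam s (i - 1) * f (real j) * (frac f (pos_part x) (i - 1) j - frac f (pos_part y) (i - 1) j) else 0)
      - (if i \<le> M - 1 then lam s i * f (real j) * (frac f (pos_part x) i j - frac f (pos_part y) i j) else 0)"
    unfolding Phi_def Psi_eq by (simp add: algebra_simps)
  ultimately show ?thesis by (smt (verit) distrib_left)
qed

lemma Phi_level_dist_le:
  assumes x: "summable_fam M x" and y: "summable_fam M y" and i: "i \<le> M"
    and lam: "\<And>k. k \<le> M \<Longrightarrow> 0 \<le> lam s k \<and> lam s k \<le> Lm"
    and d_def: "d \<equiv> \<lambda>k. \<Sum>j. \<bar>x k j - y k j\<bar>"
  shows "(\<Sum>j<N. \<bar>Phi s x i j - Phi s y i j\<bar>)
    \<le> 2 * C * d i + Lm * fu * lip_frac * ((if 1 \<le> i then d (i - 1) else 0) + d i)"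
proof -
  define A where "A = (\<lambda>j. \<bar>vmult (mu i) (pos_part x i) j - vmult (mu i) (pos_part y i) j\<bar>)"
  define F where "F = (\<lambda>k j. \<bar>frac f (pos_part x) k j - frac f (pos_part y) k j\<bar>)"
  have A: "(\<Sum>j<N. A j) \<le> 2 * C * d i"
  proof -
    have "summable A \<and> suminf A \<le> 2 * C * d i"
      using vmult_pos_part_lipschitz[OF x y i] by (simp add: A_def d_def)
    with sum_le_suminf[of A "{..<N}"] show ?thesis by (simp add: A_def)
  qed
  have F: "(\<Sum>j<N. F k j) \<le> lip_frac * d k" if "k \<le> M" for k
  proof -
    have "summable (F k) \<and> suminf (F k) \<le> lip_frac * d k"
      using frac_pos_part_lipschitz[OF x y that] by (simp add: F_def d_def)
    with sum_le_suminf[of "F k" "{..<N}"] show ?thesis by (simp add: F_def)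
  qed
  have "(\<Sum>j<N. \<bar>Phi s x i j - Phi s y i j\<bar>)
      \<le> (\<Sum>j<N. A j + Lm * fu * ((if 1 \<le> i then F (i - 1) j else 0) + F i j))"
    unfolding A_def F_def by (rule sum_mono) (rule Phi_dist_le_pointwise[OF i lam])
  also have "\<dots> = (\<Sum>j<N. A j) + Lm * fu * ((if 1 \<le> i then (\<Sum>j<N. F (i - 1) j) else 0) + (\<Sum>j<N. F i j))"
    by (simp add: sum.distrib sum_distrib_left distrib_left)
  also have "\<dots> \<le> 2 * C * d i + Lm * fu * (lip_frac * (if 1 \<le> i then d (i - 1) else 0) + lip_frac * d i)"
    using A F[of i] F[of "i - 1"] i lam[of 0] fu_pos
    by (intro add_mono mult_left_mono) auto
  finally show ?thesis by (simp add: algebra_simps)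
qed

definition lip_Phi :: "real \<Rightarrow> real" where
  "lip_Phi Lm = 2 * C + 2 * Lm * fu * lip_frac"

lemma lip_Phi_nonneg: "0 \<le> Lm \<Longrightarrow> 0 \<le> lip_Phi Lm"
  unfolding lip_Phi_def using C_nonneg fu_pos lip_frac_nonneg by simp

lemma Phi_lipschitz:
  assumes x: "summable_fam M x" and y: "summable_fam M y"
    and lam: "\<And>k. k \<le> M \<Longrightarrow> 0 \<le> lam s k \<and> lam s k \<le> Lm"
  shows "summable_fam M (fam_diff (Phi s x) (Phi s y)) \<and>
    fam_norm M (fam_diff (Phi s x) (Phi s y)) \<le> lip_Phi Lm * fam_norm M (fam_diff x y)"
proof -
  define d where "d k = (\<Sum>j. \<bar>x k j - y k j\<bar>)" for k
  have d_nonneg: "0 \<le> d k" if "k \<le> M" for k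
    using summable_fam_diff[OF x y] that by (auto simp: d_def summable_fam_def intro: suminf_nonneg)
  have L: "0 \<le> Lm * fu * lip_frac" using lam[of 0] fu_pos lip_frac_nonneg by simp
  have "(\<Sum>i\<le>M. \<Sum>j<N. \<bar>Phi s x i j - Phi s y i j\<bar>) \<le> lip_Phi Lm * fam_norm M (fam_diff x y)" for N
  proof -
    have "(\<Sum>i\<le>M. \<Sum>j<N. \<bar>Phi s x i j - Phi s y i j\<bar>)
        \<le> (\<Sum>i\<le>M. 2 * C * d i + Lm * fu * lip_frac * ((if 1 \<le> i then d (i - 1) else 0) + d i))"
      by (intro sum_mono Phi_level_dist_le[OF x y _ lam]) (auto simp: d_def)
    also have "\<dots> = 2 * C * (\<Sum>i\<le>M. d i)
        + Lm * fu * lip_frac * ((\<Sum>i\<le>M. if 1 \<le> i then d (i - 1) else 0) + (\<Sum>i\<le>M. d i))"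
      by (simp add: sum.distrib sum_distrib_left distrib_left)
    also have "\<dots> \<le> 2 * C * (\<Sum>i\<le>M. d i) + Lm * fu * lip_frac * ((\<Sum>i\<le>M. d i) + (\<Sum>i\<le>M. d i))"
      using sum_shift_down_le[of M d] d_nonneg L C_nonneg by (intro add_mono mult_left_mono) auto
    also have "\<dots> = lip_Phi Lm * fam_norm M (fam_diff x y)"
      by (simp add: lip_Phi_def fam_norm_def d_def algebra_simps)
    finally show ?thesis .
  qed
  then show ?thesis by (rule fam_norm_le_partial_bound)
qed

lemma Phi_norm_le:
  assumes "summable_fam M x" and "\<And>k. k \<le> M \<Longrightarrow> 0 \<le> lam s k \<and> lam s k \<le> Lm"
  shows "summable_fam M (Phi s x) \<and> fam_norm M (Phi s x) \<le> lip_Phi Lm * fam_norm M x"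
  using Phi_lipschitz[OF assms(1) _ assms(2), of "\<lambda>i j. 0"] by (simp add: Phi_zero summable_fam_def)

lemma Phi_nonneg_if_nonpos:
  assumes x: "summable_fam M x" and i: "i \<le> M" and "x i j \<le> 0" and s: "0 \<le> s"
  shows "0 \<le> Phi s x i j"
proof -
  interpret intensity_matrix "mu i" C by (rule mu_intensity[OF i])
  have "0 \<le> vmult (mu i) (pos_part x i) j"
    using nonneg_summable_pos_part[OF x i] assms(3)
    by (intro vmult_nonneg_at_zero) (auto simp: nonneg_summable_def pos_part_def)
  moreover have "0 \<le> frac f (pos_part x) (i - 1) j"
    using inv_phi_bounds(1)[OF nonneg_summable_pos_part[OF x, of "i - 1"]] i
    by (simp add: frac_eq_inv_phi pos_part_def)
  moreover have "frac f (pos_part x) i j = 0"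
    using assms(3) by (simp add: frac_eq_inv_phi pos_part_def)
  ultimately show ?thesis
    using lam_nonneg[OF s, of "i - 1"] i f_nonneg by (simp add: Phi_def Psi_eq)
qed

definition continuous_path :: "(real \<Rightarrow> fam) \<Rightarrow> bool" where
  "continuous_path x \<longleftrightarrow> (\<forall>t\<ge>0. summable_fam M (x t)) \<and>
     (\<forall>t\<ge>0. ((\<lambda>s. fam_norm M (fam_diff (x s) (x t))) \<longlongrightarrow> 0) (at t within {0..}))"

lemma continuous_path_summable: "continuous_path x \<Longrightarrow> 0 \<le> t \<Longrightarrow> summable_fam M (x t)"
  by (simp add: continuous_path_def)

lemma continuous_path_const: "summable_fam M u \<Longrightarrow> continuous_path (\<lambda>t. u)"
  by (simp add: continuous_path_def fam_norm_def)

lemma continuous_path_if_locally_lipschitz: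
  assumes summable: "\<And>t. 0 \<le> t \<Longrightarrow> summable_fam M (x t)"
    and lipschitz: "\<And>T. \<exists>K. \<forall>s\<in>{0..T}. \<forall>t\<in>{0..T}. fam_norm M (fam_diff (x s) (x t)) \<le> K * \<bar>s - t\<bar>"
  shows "continuous_path x"
  unfolding continuous_path_def
proof (intro conjI allI impI summable)
  fix t :: real assume t: "0 \<le> t"
  obtain K where K: "\<forall>s\<in>{0..t + 1}. fam_norm M (fam_diff (x s) (x t)) \<le> K * \<bar>s - t\<bar>"
    using lipschitz[of "t + 1"] t by fastforce
  have "eventually (\<lambda>s. norm (fam_norm M (fam_diff (x s) (x t))) \<le> K * \<bar>s - t\<bar>) (at t within {0..})"
    using eventually_le_succ_at_within_nonneg
  proof eventually_elim
    case (elim s)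
    then show ?case using K t fam_norm_nonneg[OF summable_fam_diff[OF summable summable]] by auto
  qed
  moreover have "((\<lambda>s. K * \<bar>s - t\<bar>) \<longlongrightarrow> 0) (at t within {0..})"
    by (auto intro!: tendsto_eq_intros)
  ultimately show "((\<lambda>s. fam_norm M (fam_diff (x s) (x t))) \<longlongrightarrow> 0) (at t within {0..})"
    by (rule Lim_null_comparison)
qed

lemma continuous_path_uniform_limit:
  assumes X: "\<And>n. continuous_path (X n)" and Y: "\<And>t. 0 \<le> t \<Longrightarrow> summable_fam M (Y t)"
    and unif: "\<And>T. \<exists>e. e \<longlonglongrightarrow> 0 \<and> (\<forall>n. \<forall>t\<in>{0..T}. fam_norm M (fam_diff (Y t) (X n t)) \<le> e n)"
  shows "continuous_path Y"
  unfolding continuous_path_def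
proof (intro conjI allI impI Y)
  fix t :: real assume t: "0 \<le> t"
  obtain e where e: "e \<longlonglongrightarrow> 0" "\<forall>n. \<forall>s\<in>{0..t + 1}. fam_norm M (fam_diff (Y s) (X n s)) \<le> e n"
    using unif by blast
  show "((\<lambda>s. fam_norm M (fam_diff (Y s) (Y t))) \<longlongrightarrow> 0) (at t within {0..})"
    unfolding tendsto_iff
  proof (intro allI impI)
    fix \<epsilon> :: real assume "0 < \<epsilon>"
    then obtain n where n: "e n < \<epsilon> / 3"
      using order_tendstoD(2)[OF e(1), of "\<epsilon> / 3"] by (auto simp: eventually_sequentially)
    have "eventually (\<lambda>s. fam_norm M (fam_diff (X n s) (X n t)) < \<epsilon> / 3) (at t within {0..})"
      using X[of n] t \<open>0 < \<epsilon>\<close> by (intro order_tendstoD(2)) (auto simp: continuous_path_def)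
    moreover note eventually_le_succ_at_within_nonneg
    ultimately show "eventually (\<lambda>s. dist (fam_norm M (fam_diff (Y s) (Y t))) 0 < \<epsilon>) (at t within {0..})"
    proof eventually_elim
      case (elim s)
      have s: "0 \<le> s" "s \<in> {0..t + 1}" and t1: "t \<in> {0..t + 1}" using elim(2) t by auto
      have Xs: "summable_fam M (X n s)" and Xt: "summable_fam M (X n t)"
        using X continuous_path_summable s t by blast+
      have "fam_norm M (fam_diff (Y s) (Y t))
          \<le> fam_norm M (fam_diff (Y s) (X n s)) + fam_norm M (fam_diff (X n s) (Y t))"
        by (rule fam_norm_triangle[OF Y[OF s(1)] Xs Y[OF t]])
      also have "fam_norm M (fam_diff (X n s) (Y t))
          \<le> fam_norm M (fam_diff (X n s) (X n t)) + fam_norm M (fam_diff (X n t) (Y t))"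
        by (rule fam_norm_triangle[OF Xs Xt Y[OF t]])
      moreover have "fam_norm M (fam_diff (Y s) (X n s)) \<le> e n" using e(2) s by blast
      moreover have "fam_norm M (fam_diff (X n t) (Y t)) \<le> e n"
        using e(2) t1 fam_norm_diff_commute[of M "X n t" "Y t"] by simp
      ultimately have "fam_norm M (fam_diff (Y s) (Y t)) < \<epsilon>"
        using elim(1) n by linarith
      then show ?case
        using fam_norm_nonneg[OF summable_fam_diff[OF Y[OF s(1)] Y[OF t]]] by simp
    qed
  qed
qed

lemma continuous_on_if_dominated:
  assumes x: "continuous_path x"
    and c: "\<And>s t. 0 \<le> s \<Longrightarrow> 0 \<le> t \<Longrightarrow> \<bar>c s - c t\<bar> \<le> K * fam_norm M (fam_diff (x s) (x t))"
  shows "continuous_on {0..} c"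
  unfolding continuous_on_def
proof (intro ballI)
  fix t :: real assume t: "t \<in> {0..}"
  have "((\<lambda>s. K * fam_norm M (fam_diff (x s) (x t))) \<longlongrightarrow> K * 0) (at t within {0..})"
    using x t by (intro tendsto_mult tendsto_const) (auto simp: continuous_path_def)
  then have bound: "((\<lambda>s. K * fam_norm M (fam_diff (x s) (x t))) \<longlongrightarrow> 0) (at t within {0..})"
    by simp
  have "eventually (\<lambda>s. norm (c s - c t) \<le> K * fam_norm M (fam_diff (x s) (x t))) (at t within {0..})"
    unfolding eventually_at_filter using c t by (intro always_eventually) simp
  from Lim_null_comparison[OF this bound]
  have "((\<lambda>s. c s - c t) \<longlongrightarrow> 0) (at t within {0..})" .
  then show "(c \<longlongrightarrow> c t) (at t within {0..})" by (rule LIM_zero_cancel)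
qed

lemma continuous_path_norm_bounded:
  assumes "continuous_path x"
  shows "\<exists>B. \<forall>s\<in>{0..T}. fam_norm M (x s) \<le> B"
proof -
  have "continuous_on {0..} (\<lambda>s. fam_norm M (x s))"
  proof (rule continuous_on_if_dominated[OF assms, where K=1])
    fix s t :: real assume "0 \<le> s" "0 \<le> t"
    then have xs: "summable_fam M (x s)" and xt: "summable_fam M (x t)"
      using assms continuous_path_summable by blast+
    show "\<bar>fam_norm M (x s) - fam_norm M (x t)\<bar> \<le> 1 * fam_norm M (fam_diff (x s) (x t))"
      using fam_norm_triangle[OF xs xt, of "\<lambda>i j. 0"] fam_norm_triangle[OF xt xs, of "\<lambda>i j. 0"]
        fam_norm_diff_commute[of M "x s" "x t"]
      by (simp add: summable_fam_def)
  qed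
  then have "continuous_on {0..T} (\<lambda>s. fam_norm M (x s))"
    by (rule continuous_on_subset) auto
  then have "compact ((\<lambda>s. fam_norm M (x s)) ` {0..T})"
    by (rule compact_continuous_image) simp
  then obtain B where "\<forall>y\<in>(\<lambda>s. fam_norm M (x s)) ` {0..T}. norm y \<le> B"
    using compact_imp_bounded bounded_iff by metis
  then show ?thesis by (intro exI[of _ B]) (auto simp: abs_le_iff)
qed

lemma continuous_path_entry:
  assumes "continuous_path x" and "i \<le> M"
  shows "continuous_on {0..} (\<lambda>s. x s i j)"
  using abs_le_fam_norm[OF summable_fam_diff[OF continuous_path_summable continuous_path_summable] assms(2)] assms(1)
  by (intro continuous_on_if_dominated[OF assms(1), where K=1]) auto

lemma continuous_on_if_level_lipschitz:
  assumes x: "continuous_path x" and k: "k \<le> M" and K: "0 \<le> K"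
    and lip: "\<And>s t. 0 \<le> s \<Longrightarrow> 0 \<le> t \<Longrightarrow>
      summable (\<lambda>j. \<bar>g s j - g t j\<bar>) \<and> (\<Sum>j. \<bar>g s j - g t j\<bar>) \<le> K * (\<Sum>j. \<bar>x s k j - x t k j\<bar>)"
  shows "continuous_on {0..} (\<lambda>s. g s j)"
proof (rule continuous_on_if_dominated[OF x, where K=K])
  fix s t :: real assume st: "0 \<le> s" "0 \<le> t"
  have "\<bar>g s j - g t j\<bar> \<le> (\<Sum>j. \<bar>g s j - g t j\<bar>)"
    using abs_le_suminf_abs[of "\<lambda>j. g s j - g t j"] lip[OF st] by blast
  also have "\<dots> \<le> K * (\<Sum>j. \<bar>x s k j - x t k j\<bar>)"
    using lip[OF st] by blast
  also have "\<dots> \<le> K * fam_norm M (fam_diff (x s) (x t))"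
    using level_norm_le_fam_norm[OF summable_fam_diff[OF continuous_path_summable[OF x st(1)]
        continuous_path_summable[OF x st(2)]] k] K
    by (intro mult_left_mono) auto
  finally show "\<bar>g s j - g t j\<bar> \<le> K * fam_norm M (fam_diff (x s) (x t))" .
qed

lemma Phi_path_measurable:
  assumes x: "continuous_path x" and i: "i \<le> M"
  shows "(\<lambda>s. Phi s (x s) i j) \<in> borel_measurable (lebesgue_on {0..t})"
proof -
  have xs: "summable_fam M (x s)" if "0 \<le> s" for s
    using continuous_path_summable[OF x that] .
  have cont_meas: "c \<in> borel_measurable (lebesgue_on {0..t})" if "continuous_on {0..} c" for c :: "real \<Rightarrow> real"
    by (rule continuous_imp_measurable_on_sets_lebesgue[OF continuous_on_subset[OF that]]) auto
  have vmult_cont: "continuous_on {0..} (\<lambda>s. vmult (mu i) (pos_part (x s) i) j)"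
    using vmult_pos_part_lipschitz[OF xs xs i] C_nonneg
    by (intro continuous_on_if_level_lipschitz[OF x i, where K="2 * C"]) auto
  have frac_cont: "continuous_on {0..} (\<lambda>s. frac f (pos_part (x s)) k j)" if k: "k \<le> M" for k
    using frac_pos_part_lipschitz[OF xs xs k] lip_frac_nonneg
    by (intro continuous_on_if_level_lipschitz[OF x k, where K=lip_frac]) auto
  have lam_meas: "(\<lambda>s. lam s k) \<in> borel_measurable (lebesgue_on {0..t})" if "k \<le> M" for k
    by (rule right_continuous_borel_measurable) (rule lam_right_cont[OF that])
  have jump_meas: "(\<lambda>s. if b then lam s k * f (real j) * frac f (pos_part (x s)) k j else 0)
      \<in> borel_measurable (lebesgue_on {0..t})" if "k \<le> M" for k b
    using borel_measurable_times[OF borel_measurable_times[OF lam_meas[OF that] borel_measurable_const]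
        cont_meas[OF frac_cont[OF that]]]
    by (cases b) simp_all
  show ?thesis
    unfolding Phi_def Psi_eq using i
    by (intro borel_measurable_diff borel_measurable_add cont_meas[OF vmult_cont] jump_meas) auto
qed

lemma Phi_path_level_bound:
  assumes x: "continuous_path x" and Lm: "rate_bound T Lm" and B: "\<forall>s\<in>{0..T}. fam_norm M (x s) \<le> B"
    and s: "s \<in> {0..T}" and i: "i \<le> M"
  shows "summable (\<lambda>j. \<bar>Phi s (x s) i j\<bar>) \<and> (\<Sum>j. \<bar>Phi s (x s) i j\<bar>) \<le> lip_Phi Lm * B"
proof -
  have P: "summable_fam M (Phi s (x s)) \<and> fam_norm M (Phi s (x s)) \<le> lip_Phi Lm * fam_norm M (x s)"
    using s by (intro Phi_norm_le continuous_path_summable[OF x] rate_boundD[OF Lm]) auto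
  have "(\<Sum>j. \<bar>Phi s (x s) i j\<bar>) \<le> lip_Phi Lm * fam_norm M (x s)"
    using level_norm_le_fam_norm[OF conjunct1[OF P] i] P by linarith
  also have "\<dots> \<le> lip_Phi Lm * B"
    using B s lip_Phi_nonneg Lm by (intro mult_left_mono) (auto simp: rate_bound_def)
  finally show ?thesis using P i by (simp add: summable_fam_def)
qed

lemma Phi_path_integrable:
  assumes x: "continuous_path x" and i: "i \<le> M" and a: "0 \<le> a"
  shows "(\<lambda>s. Phi s (x s) i j) absolutely_integrable_on {a..b}"
proof -
  obtain Lm where Lm: "rate_bound b Lm" using rate_bound_exists by blast
  obtain B where B: "\<forall>s\<in>{0..b}. fam_norm M (x s) \<le> B"
    using continuous_path_norm_bounded[OF x] by blast
  have "(\<lambda>s. Phi s (x s) i j) absolutely_integrable_on {0..b}"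
  proof (rule measurable_bounded_by_integrable_imp_absolutely_integrable[OF Phi_path_measurable[OF x i]])
    fix s assume "s \<in> {0..b}"
    from Phi_path_level_bound[OF x Lm B this i]
    show "norm (Phi s (x s) i j) \<le> lip_Phi Lm * B"
      using abs_le_suminf_abs[of "\<lambda>j. Phi s (x s) i j" j] by simp
  qed auto
  then show ?thesis
    by (rule absolutely_integrable_on_subinterval) (use a in auto)
qed

lemma Phi_path_integrable_on: "continuous_path x \<Longrightarrow> i \<le> M \<Longrightarrow> 0 \<le> a \<Longrightarrow> (\<lambda>s. Phi s (x s) i j) integrable_on {a..b}"
  using Phi_path_integrable absolutely_integrable_on_def by blast

abbreviation Phi_integral :: "(real \<Rightarrow> fam) \<Rightarrow> real \<Rightarrow> real \<Rightarrow> fam" where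
  "Phi_integral x a b \<equiv> \<lambda>i j. integral {a..b} (\<lambda>s. Phi s (x s) i j)"

lemma Phi_integral_dist_le:
  assumes x: "continuous_path x" and y: "continuous_path y" and a: "0 \<le> a" and Lm: "rate_bound b Lm"
    and h: "h integrable_on {a..b}"
    and le: "\<And>s. s \<in> {a..b} \<Longrightarrow> lip_Phi Lm * fam_norm M (fam_diff (x s) (y s)) \<le> h s"
  shows "summable_fam M (fam_diff (Phi_integral x a b) (Phi_integral y a b)) \<and>
    fam_norm M (fam_diff (Phi_integral x a b) (Phi_integral y a b)) \<le> integral {a..b} h"
proof -
  define g where "g = (\<lambda>(i, j) s. Phi s (x s) i j - Phi s (y s) i j)"
  have g_int: "g k absolutely_integrable_on {a..b}" if "k \<in> {..M} \<times> {..<N}" for k N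
    using that Phi_path_integrable[OF x _ a] Phi_path_integrable[OF y _ a]
    by (auto simp: g_def intro!: set_integral_diff(1))
  have integral_g: "integral {a..b} (\<lambda>s. Phi s (x s) i j) - integral {a..b} (\<lambda>s. Phi s (y s) i j)
      = integral {a..b} (g (i, j))" if "i \<le> M" for i j
    using integral_diff[OF Phi_path_integrable_on[OF x that a] Phi_path_integrable_on[OF y that a]]
    by (simp add: g_def)
  have "(\<Sum>i\<le>M. \<Sum>j<N. \<bar>integral {a..b} (\<lambda>s. Phi s (x s) i j) - integral {a..b} (\<lambda>s. Phi s (y s) i j)\<bar>)
      \<le> integral {a..b} h" for N
  proof -
    have "(\<Sum>i\<le>M. \<Sum>j<N. \<bar>integral {a..b} (\<lambda>s. Phi s (x s) i j) - integral {a..b} (\<lambda>s. Phi s (y s) i j)\<bar>)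
        = (\<Sum>k\<in>{..M} \<times> {..<N}. \<bar>integral {a..b} (g k)\<bar>)"
      by (simp add: integral_g sum.cartesian_product)
    also have "\<dots> \<le> integral {a..b} h"
    proof (rule integral_abs_sum_le[OF _ g_int h])
      fix s assume s: "s \<in> {a..b}"
      have xs: "summable_fam M (x s)" and ys: "summable_fam M (y s)"
        using s a continuous_path_summable x y by auto
      have P: "summable_fam M (fam_diff (Phi s (x s)) (Phi s (y s))) \<and>
         fam_norm M (fam_diff (Phi s (x s)) (Phi s (y s))) \<le> lip_Phi Lm * fam_norm M (fam_diff (x s) (y s))"
        using s a by (intro Phi_lipschitz xs ys rate_boundD[OF Lm]) auto
      have "(\<Sum>k\<in>{..M} \<times> {..<N}. \<bar>g k s\<bar>) = (\<Sum>i\<le>M. \<Sum>j<N. \<bar>Phi s (x s) i j - Phi s (y s) i j\<bar>)"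
        by (simp add: sum.cartesian_product g_def case_prod_beta)
      also have "\<dots> \<le> fam_norm M (fam_diff (Phi s (x s)) (Phi s (y s)))"
        using partial_sum_le_fam_norm P by blast
      finally show "(\<Sum>k\<in>{..M} \<times> {..<N}. \<bar>g k s\<bar>) \<le> h s" using P le[OF s] by linarith
    qed auto
    finally show ?thesis .
  qed
  then show ?thesis by (rule fam_norm_le_partial_bound)
qed

text \<open>The inductive step of Gronwall's lemma.\<close>

lemma Phi_integral_dist_power_le:
  assumes x: "continuous_path x" and y: "continuous_path y" and t: "0 \<le> t" and Lm: "rate_bound t Lm"
    and le: "\<And>s. s \<in> {0..t} \<Longrightarrow> fam_norm M (fam_diff (x s) (y s)) \<le> D * ((lip_Phi Lm * s) ^ n / fact n)"
  shows "summable_fam M (fam_diff (Phi_integral x 0 t) (Phi_integral y 0 t)) \<and>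
    fam_norm M (fam_diff (Phi_integral x 0 t) (Phi_integral y 0 t))
      \<le> D * ((lip_Phi Lm * t) ^ Suc n / fact (Suc n))"
proof -
  let ?L = "lip_Phi Lm"
  have L: "0 \<le> ?L" using Lm lip_Phi_nonneg by (simp add: rate_bound_def)
  have int: "((\<lambda>s. D * (?L * (?L * s) ^ n / fact n)) has_integral D * ((?L * t) ^ Suc n / fact (Suc n))) {0..t}"
    by (rule has_integral_power_scaled[OF t])
  have "summable_fam M (fam_diff (Phi_integral x 0 t) (Phi_integral y 0 t)) \<and>
      fam_norm M (fam_diff (Phi_integral x 0 t) (Phi_integral y 0 t))
        \<le> integral {0..t} (\<lambda>s. D * (?L * (?L * s) ^ n / fact n))"
  proof (rule Phi_integral_dist_le[OF x y order_refl Lm])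
    show "(\<lambda>s. D * (?L * (?L * s) ^ n / fact n)) integrable_on {0..t}"
      using int by blast
    fix s assume "s \<in> {0..t}"
    then show "?L * fam_norm M (fam_diff (x s) (y s)) \<le> D * (?L * (?L * s) ^ n / fact n)"
      using mult_left_mono[OF le L] by (simp add: algebra_simps)
  qed
  then show ?thesis using integral_unique[OF int] by simp
qed

lemma Phi_integral_norm_le:
  assumes x: "continuous_path x" and a: "0 \<le> a" and ab: "a \<le> b" and Lm: "rate_bound b Lm"
    and B: "\<And>s. s \<in> {a..b} \<Longrightarrow> fam_norm M (x s) \<le> B"
  shows "summable_fam M (Phi_integral x a b) \<and> fam_norm M (Phi_integral x a b) \<le> lip_Phi Lm * B * (b - a)"
proof -
  have "summable_fam M (fam_diff (Phi_integral x a b) (Phi_integral (\<lambda>t i j. 0) a b)) \<and>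
      fam_norm M (fam_diff (Phi_integral x a b) (Phi_integral (\<lambda>t i j. 0) a b)) \<le> integral {a..b} (\<lambda>s. lip_Phi Lm * B)"
    using lip_Phi_nonneg Lm B
    by (intro Phi_integral_dist_le[OF x continuous_path_const a Lm])
       (auto simp: summable_fam_def rate_bound_def intro: mult_left_mono)
  then show ?thesis using ab by (simp add: Phi_zero mult_ac)
qed

section \<open>Picard iteration\<close>

definition picard :: "(real \<Rightarrow> fam) \<Rightarrow> real \<Rightarrow> fam" where
  "picard x t = (\<lambda>i j. P0 x0 y0 i j + integral {0..t} (\<lambda>s. Phi s (x s) i j))"

lemma picard_diff:
  assumes "continuous_path x" and "i \<le> M" and "0 \<le> a" and "a \<le> b"
  shows "picard x b i j - picard x a i j = integral {a..b} (\<lambda>s. Phi s (x s) i j)"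
proof -
  have "(\<lambda>s. Phi s (x s) i j) integrable_on {0..b}"
    by (rule Phi_path_integrable_on[OF assms(1,2) order_refl])
  from Henstock_Kurzweil_Integration.integral_combine[OF assms(3,4) this]
  show ?thesis unfolding picard_def by linarith
qed

lemma continuous_path_picard:
  assumes x: "continuous_path x"
  shows "continuous_path (picard x)"
proof (rule continuous_path_if_locally_lipschitz)
  fix T :: real
  obtain Lm where Lm: "rate_bound T Lm" using rate_bound_exists by blast
  obtain B where B: "\<forall>s\<in>{0..T}. fam_norm M (x s) \<le> B"
    using continuous_path_norm_bounded[OF x] by blast
  have step: "fam_norm M (fam_diff (picard x b) (picard x a)) \<le> lip_Phi Lm * B * (b - a)"
    if "0 \<le> a" "a \<le> b" "b \<le> T" for a b
  proof -
    have "fam_norm M (fam_diff (picard x b) (picard x a)) = fam_norm M (Phi_integral x a b)"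
      using picard_diff[OF x _ that(1,2)] by (intro fam_norm_cong) auto
    also have "\<dots> \<le> lip_Phi Lm * B * (b - a)"
      using B that by (intro conjunct2[OF Phi_integral_norm_le[OF x that(1,2) rate_bound_mono[OF Lm]]]) auto
    finally show ?thesis .
  qed
  show "\<exists>K. \<forall>s\<in>{0..T}. \<forall>t\<in>{0..T}. fam_norm M (fam_diff (picard x s) (picard x t)) \<le> K * \<bar>s - t\<bar>"
  proof (intro exI ballI)
    fix s t assume "s \<in> {0..T}" "t \<in> {0..T}"
    then show "fam_norm M (fam_diff (picard x s) (picard x t)) \<le> lip_Phi Lm * B * \<bar>s - t\<bar>"
      using step[of t s] step[of s t] fam_norm_diff_commute[of M "picard x s"]
      by (cases "t \<le> s") auto
  qed
next
  fix t :: real assume "0 \<le> t"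
  obtain Lm where Lm: "rate_bound t Lm" using rate_bound_exists by blast
  obtain B where "\<forall>s\<in>{0..t}. fam_norm M (x s) \<le> B"
    using continuous_path_norm_bounded[OF x] by blast
  then have "summable_fam M (Phi_integral x 0 t) \<and> fam_norm M (Phi_integral x 0 t) \<le> lip_Phi Lm * B * (t - 0)"
    by (intro Phi_integral_norm_le[OF x order_refl \<open>0 \<le> t\<close> Lm]) auto
  from summable_fam_add[OF summable_fam_P0[of M x0 y0] conjunct1[OF this]]
  show "summable_fam M (picard x t)" by (simp add: picard_def)
qed

primrec picard_iter :: "nat \<Rightarrow> real \<Rightarrow> fam" where
  "picard_iter 0 = (\<lambda>t. P0 x0 y0)"
| "picard_iter (Suc n) = picard (picard_iter n)"

lemma continuous_path_picard_iter: "continuous_path (picard_iter n)"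
  by (induction n) (auto intro: continuous_path_picard continuous_path_const summable_fam_P0)

lemma picard_iter_step_le:
  assumes t: "0 \<le> t" and Lm: "rate_bound t Lm"
  shows "summable_fam M (fam_diff (picard_iter (Suc n) t) (picard_iter n t)) \<and>
    fam_norm M (fam_diff (picard_iter (Suc n) t) (picard_iter n t)) \<le> (lip_Phi Lm * t) ^ Suc n / fact (Suc n)"
  using t Lm
proof (induction n arbitrary: t)
  case 0
  have "summable_fam M (fam_diff (Phi_integral (picard_iter 0) 0 t) (Phi_integral (\<lambda>s i j. 0) 0 t)) \<and>
      fam_norm M (fam_diff (Phi_integral (picard_iter 0) 0 t) (Phi_integral (\<lambda>s i j. 0) 0 t))
        \<le> 1 * ((lip_Phi Lm * t) ^ Suc 0 / fact (Suc 0))"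
    using 0 fam_norm_P0[OF x0_le]
    by (intro Phi_integral_dist_power_le continuous_path_picard_iter continuous_path_const)
       (auto simp: summable_fam_def)
  then show ?case by (simp add: picard_def Phi_zero)
next
  case (Suc n)
  have "summable_fam M (fam_diff (Phi_integral (picard_iter (Suc n)) 0 t) (Phi_integral (picard_iter n) 0 t)) \<and>
      fam_norm M (fam_diff (Phi_integral (picard_iter (Suc n)) 0 t) (Phi_integral (picard_iter n) 0 t))
        \<le> 1 * ((lip_Phi Lm * t) ^ Suc (Suc n) / fact (Suc (Suc n)))"
    using Suc.prems Suc.IH rate_bound_mono[OF Suc.prems(2)]
    by (intro Phi_integral_dist_power_le continuous_path_picard_iter) auto
  then show ?case by (simp add: picard_def)
qed

lemma picard_iter_dist_le:
  assumes Lm: "rate_bound T Lm" and t: "t \<in> {0..T}" and "n \<le> m"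
  shows "summable_fam M (fam_diff (picard_iter m t) (picard_iter n t)) \<and>
    fam_norm M (fam_diff (picard_iter m t) (picard_iter n t)) \<le> exp_tail (lip_Phi Lm * T) (Suc n)"
proof -
  define c where "c = lip_Phi Lm * T"
  have c: "0 \<le> c" using t Lm lip_Phi_nonneg by (auto simp: c_def rate_bound_def)
  have summable: "summable_fam M (picard_iter k t)" for k
    using continuous_path_picard_iter continuous_path_summable t by auto
  have "fam_norm M (fam_diff (picard_iter m t) (picard_iter n t)) \<le> (\<Sum>k\<in>{Suc n..<Suc m}. c ^ k / fact k)"
    using \<open>n \<le> m\<close>
  proof (induction m rule: dec_induct)
    case (step m)
    have L: "0 \<le> lip_Phi Lm" using Lm lip_Phi_nonneg by (simp add: rate_bound_def)
    have "lip_Phi Lm * t \<le> c" using t L by (simp add: c_def mult_left_mono)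
    then have "(lip_Phi Lm * t) ^ Suc m / fact (Suc m) \<le> c ^ Suc m / fact (Suc m)"
      using t L by (intro divide_right_mono power_mono) auto
    moreover have "fam_norm M (fam_diff (picard_iter (Suc m) t) (picard_iter m t)) \<le> (lip_Phi Lm * t) ^ Suc m / fact (Suc m)"
      using picard_iter_step_le[of t Lm m] rate_bound_mono[OF Lm] t by simp
    ultimately have "fam_norm M (fam_diff (picard_iter (Suc m) t) (picard_iter m t)) \<le> c ^ Suc m / fact (Suc m)"
      by linarith
    moreover have "(\<Sum>k\<in>{Suc n..<Suc (Suc m)}. c ^ k / fact k) = (\<Sum>k\<in>{Suc n..<Suc m}. c ^ k / fact k) + c ^ Suc m / fact (Suc m)"
      using step.hyps by simp
    ultimately show ?case
      using fam_norm_triangle[OF summable[of "Suc m"] summable[of m] summable[of n]] step.IH by linarith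
  qed (simp add: fam_norm_def)
  then show ?thesis
    using sum_le_exp_tail[OF c, of "Suc n" "Suc m"] \<open>n \<le> m\<close> summable_fam_diff[OF summable summable]
    by (simp add: c_def)
qed

definition sol :: "real \<Rightarrow> fam" where
  "sol t i j = P0 x0 y0 i j + (\<Sum>k. picard_iter (Suc k) t i j - picard_iter k t i j)"

lemma picard_iter_tendsto_sol:
  assumes t: "0 \<le> t" and i: "i \<le> M"
  shows "(\<lambda>n. picard_iter n t i j) \<longlonglongrightarrow> sol t i j"
proof -
  obtain Lm where Lm: "rate_bound t Lm" using rate_bound_exists by blast
  define c where "c = lip_Phi Lm * t"
  have "summable (\<lambda>k. picard_iter (Suc k) t i j - picard_iter k t i j)"
  proof (rule summable_comparison_test[OF _ summable_ignore_initial_segment[OF summable_exp_terms, of c 1]])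
    have "\<bar>picard_iter (Suc k) t i j - picard_iter k t i j\<bar> \<le> c ^ (k + 1) / fact (k + 1)" for k
    proof -
      note step = picard_iter_step_le[OF t Lm, of k]
      show ?thesis
        using order_trans[OF abs_le_fam_norm[OF conjunct1[OF step] i] conjunct2[OF step]] by (simp add: c_def)
    qed
    then show "\<exists>N. \<forall>k\<ge>N. norm (picard_iter (Suc k) t i j - picard_iter k t i j) \<le> c ^ (k + 1) / fact (k + 1)"
      by auto
  qed
  moreover have "(\<lambda>n. picard_iter n t i j) = (\<lambda>n. P0 x0 y0 i j + (\<Sum>k<n. picard_iter (Suc k) t i j - picard_iter k t i j))"
  proof
    show "picard_iter n t i j = P0 x0 y0 i j + (\<Sum>k<n. picard_iter (Suc k) t i j - picard_iter k t i j)" for n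
      by (induction n) simp_all
  qed
  ultimately show ?thesis
    unfolding sol_def by (simp only:) (intro tendsto_add tendsto_const summable_LIMSEQ)
qed

lemma sol_dist_le:
  assumes Lm: "rate_bound T Lm" and t: "t \<in> {0..T}"
  shows "summable_fam M (fam_diff (sol t) (picard_iter n t)) \<and>
    fam_norm M (fam_diff (sol t) (picard_iter n t)) \<le> exp_tail (lip_Phi Lm * T) (Suc n)"
proof (rule fam_norm_le_partial_bound)
  fix N
  show "(\<Sum>i\<le>M. \<Sum>j<N. \<bar>sol t i j - picard_iter n t i j\<bar>) \<le> exp_tail (lip_Phi Lm * T) (Suc n)"
  proof (rule LIMSEQ_le_const2)
    show "(\<lambda>m. \<Sum>i\<le>M. \<Sum>j<N. \<bar>picard_iter m t i j - picard_iter n t i j\<bar>)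
        \<longlonglongrightarrow> (\<Sum>i\<le>M. \<Sum>j<N. \<bar>sol t i j - picard_iter n t i j\<bar>)"
      using t by (intro tendsto_intros picard_iter_tendsto_sol) auto
    show "\<exists>m0. \<forall>m\<ge>m0. (\<Sum>i\<le>M. \<Sum>j<N. \<bar>picard_iter m t i j - picard_iter n t i j\<bar>) \<le> exp_tail (lip_Phi Lm * T) (Suc n)"
      using picard_iter_dist_le[OF Lm t] partial_sum_le_fam_norm order_trans by blast
  qed
qed

lemma summable_fam_sol:
  assumes "0 \<le> t"
  shows "summable_fam M (sol t)"
proof -
  obtain Lm where Lm: "rate_bound t Lm" using rate_bound_exists by blast
  have "summable_fam M (fam_diff (sol t) (picard_iter 0 t))"
    using sol_dist_le[OF Lm, of t 0] assms by auto
  from summable_fam_add[OF this summable_fam_P0[of M x0 y0]] show ?thesis by simp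
qed

lemma continuous_path_sol: "continuous_path sol"
proof (rule continuous_path_uniform_limit[OF continuous_path_picard_iter summable_fam_sol])
  fix T :: real
  obtain Lm where Lm: "rate_bound T Lm" using rate_bound_exists by blast
  have "(\<lambda>n. exp_tail (lip_Phi Lm * T) (Suc n)) \<longlonglongrightarrow> 0"
    using LIMSEQ_Suc[OF exp_tail_tendsto_0] .
  then show "\<exists>e. e \<longlonglongrightarrow> 0 \<and> (\<forall>n. \<forall>t\<in>{0..T}. fam_norm M (fam_diff (sol t) (picard_iter n t)) \<le> e n)"
    using sol_dist_le[OF Lm] by blast
qed

lemma sol_fixed_point:
  assumes t: "0 \<le> t" and i: "i \<le> M"
  shows "sol t i j = P0 x0 y0 i j + integral {0..t} (\<lambda>s. Phi s (sol s) i j)"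
proof -
  obtain Lm where Lm: "rate_bound t Lm" using rate_bound_exists by blast
  define e where "e n = lip_Phi Lm * exp_tail (lip_Phi Lm * t) (Suc n) * t" for n
  have close: "\<bar>integral {0..t} (\<lambda>s. Phi s (picard_iter n s) i j) - integral {0..t} (\<lambda>s. Phi s (sol s) i j)\<bar> \<le> e n" for n
  proof -
    have P: "summable_fam M (fam_diff (Phi_integral (picard_iter n) 0 t) (Phi_integral sol 0 t)) \<and>
        fam_norm M (fam_diff (Phi_integral (picard_iter n) 0 t) (Phi_integral sol 0 t))
          \<le> integral {0..t} (\<lambda>s. lip_Phi Lm * exp_tail (lip_Phi Lm * t) (Suc n))"
    proof (rule Phi_integral_dist_le[OF continuous_path_picard_iter continuous_path_sol order_refl Lm])
      fix s assume "s \<in> {0..t}"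
      then show "lip_Phi Lm * fam_norm M (fam_diff (picard_iter n s) (sol s)) \<le> lip_Phi Lm * exp_tail (lip_Phi Lm * t) (Suc n)"
        using sol_dist_le[OF Lm, of s n] fam_norm_diff_commute[of M "sol s"] lip_Phi_nonneg Lm
        by (simp add: rate_bound_def mult_left_mono)
    qed auto
    show ?thesis
      using order_trans[OF abs_le_fam_norm[OF conjunct1[OF P] i] conjunct2[OF P]] t
      by (simp add: e_def mult_ac)
  qed
  have e: "e \<longlonglongrightarrow> 0"
    unfolding e_def using tendsto_mult[OF tendsto_mult[OF tendsto_const LIMSEQ_Suc[OF exp_tail_tendsto_0]] tendsto_const]
    by simp
  have "eventually (\<lambda>n. norm (integral {0..t} (\<lambda>s. Phi s (picard_iter n s) i j)
      - integral {0..t} (\<lambda>s. Phi s (sol s) i j)) \<le> e n) sequentially"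
    using close by simp
  from Lim_null_comparison[OF this e]
  have "(\<lambda>n. integral {0..t} (\<lambda>s. Phi s (picard_iter n s) i j)) \<longlonglongrightarrow> integral {0..t} (\<lambda>s. Phi s (sol s) i j)"
    by (rule LIM_zero_cancel)
  then have "(\<lambda>n. picard_iter (Suc n) t i j) \<longlonglongrightarrow> P0 x0 y0 i j + integral {0..t} (\<lambda>s. Phi s (sol s) i j)"
    by (simp add: picard_def tendsto_add)
  moreover have "(\<lambda>n. picard_iter (Suc n) t i j) \<longlonglongrightarrow> sol t i j"
    using LIMSEQ_Suc[OF picard_iter_tendsto_sol[OF t i]] .
  ultimately show ?thesis using LIMSEQ_unique by blast
qed

section \<open>Positivity and conservation of mass\<close>

lemma sol_eq_picard: "0 \<le> t \<Longrightarrow> i \<le> M \<Longrightarrow> sol t i j = picard sol t i j"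
  using sol_fixed_point by (simp add: picard_def)

lemma sol_nonneg:
  assumes t: "0 \<le> t" and i: "i \<le> M"
  shows "0 \<le> sol t i j"
proof (rule nonneg_if_increasing_where_nonpos[OF _ t])
  show "continuous_on {0..t} (\<lambda>s. sol s i j)"
    by (rule continuous_on_subset[OF continuous_path_entry[OF continuous_path_sol i]]) auto
  show "0 \<le> sol 0 i j"
    using sol_fixed_point[OF order_refl i] by (simp add: P0_def)
  fix a assume a: "a \<in> {0..t}" and nonpos: "\<And>s. s \<in> {a..t} \<Longrightarrow> sol s i j \<le> 0"
  have "0 \<le> integral {a..t} (\<lambda>s. Phi s (sol s) i j)"
    using a Phi_path_integrable_on[OF continuous_path_sol i] nonpos
    by (intro integral_nonneg Phi_nonneg_if_nonpos[OF summable_fam_sol i]) auto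
  then show "sol a i j \<le> sol t i j"
    using picard_diff[OF continuous_path_sol i, of a t j] sol_eq_picard[OF t i] sol_eq_picard[of a i] a i
    by simp
qed

lemma Psi_level_sums:
  assumes y: "summable_fam M y" and y_nonneg: "nonneg_fam M y" and i: "i \<le> M"
  shows "(\<lambda>j. Psi M lam f mu s y i j) sums
    ((if 1 \<le> i then lam s (i - 1) * (\<Sum>l. y (i - 1) l) else 0) - (if i \<le> M - 1 then lam s i * (\<Sum>l. y i l) else 0))"
proof -
  have level: "nonneg_summable (y k)" if "k \<le> M" for k
    using y y_nonneg that by (auto simp: nonneg_summable_def summable_fam_def nonneg_fam_def)
  have vmult: "vmult (mu i) (y i) sums 0"
    using intensity_matrix.vmult_sums_zero[OF mu_intensity[OF i] nonneg_summable_abs[OF level[OF i]]] .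
  have jump: "(\<lambda>j. lam s k * f (real j) * frac f y k j) sums (lam s k * (\<Sum>l. y k l))" if "k \<le> M" for k
    using sums_mult[OF weighted_inv_phi_sums[OF level[OF that]], of "lam s k"]
    by (simp add: frac_eq_inv_phi mult.assoc)
  have inflow: "(\<lambda>j. if 1 \<le> i then lam s (i - 1) * f (real j) * frac f y (i - 1) j else 0) sums
      (if 1 \<le> i then lam s (i - 1) * (\<Sum>l. y (i - 1) l) else 0)"
    using jump[of "i - 1"] i by (cases "1 \<le> i") auto
  have outflow: "(\<lambda>j. if i \<le> M - 1 then lam s i * f (real j) * frac f y i j else 0) sums
      (if i \<le> M - 1 then lam s i * (\<Sum>l. y i l) else 0)"
    using jump[of i] i by (cases "i \<le> M - 1") auto
  show ?thesis
    using sums_diff[OF sums_add[OF vmult inflow] outflow] by (simp add: Psi_eq)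
qed

definition level_flux :: "nat \<Rightarrow> real \<Rightarrow> real" where
  "level_flux i s = (if 1 \<le> i then lam s (i - 1) * (\<Sum>l. sol s (i - 1) l) else 0)
     - (if i \<le> M - 1 then lam s i * (\<Sum>l. sol s i l) else 0)"

lemma sum_level_flux: "(\<Sum>i\<le>M. level_flux i s) = 0"
proof -
  obtain m where m: "M = Suc m" using M_pos by (cases M) auto
  show ?thesis
    unfolding level_flux_def sum_subtractf
    using sum_shift_down[where m=m and c="\<lambda>k. lam s k * (\<Sum>l. sol s k l)"] by (simp add: m sum.atMost_Suc)
qed

text \<open>Dominated convergence exchanges the integral with the sum over \<open>j\<close>.\<close>

lemma integral_Phi_sol_sums:
  assumes t: "0 \<le> t" and i: "i \<le> M"
  shows "level_flux i integrable_on {0..t}"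
    and "(\<lambda>j. integral {0..t} (\<lambda>s. Phi s (sol s) i j)) sums integral {0..t} (level_flux i)"
proof -
  obtain Lm where Lm: "rate_bound t Lm" using rate_bound_exists by blast
  obtain B where B: "\<forall>s\<in>{0..t}. fam_norm M (sol s) \<le> B"
    using continuous_path_norm_bounded[OF continuous_path_sol] by blast
  define F where "F N s = (\<Sum>j<N. Phi s (sol s) i j)" for N s
  have F_int: "F N integrable_on {0..t}" for N
    unfolding F_def by (intro integrable_sum Phi_path_integrable_on[OF continuous_path_sol i]) auto
  have F_le: "norm (F N s) \<le> lip_Phi Lm * B" if "s \<in> {0..t}" for N s
  proof -
    note level = Phi_path_level_bound[OF continuous_path_sol Lm B that i]
    have "norm (F N s) \<le> (\<Sum>j<N. \<bar>Phi s (sol s) i j\<bar>)"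
      unfolding F_def by (simp add: sum_abs)
    also have "\<dots> \<le> (\<Sum>j. \<bar>Phi s (sol s) i j\<bar>)"
      using level by (intro sum_le_suminf) auto
    finally show ?thesis using level by linarith
  qed
  have F_lim: "(\<lambda>N. F N s) \<longlonglongrightarrow> level_flux i s" if "s \<in> {0..t}" for s
  proof -
    have s: "0 \<le> s" using that by simp
    have nonneg: "nonneg_fam M (sol s)" using sol_nonneg[OF s] by (simp add: nonneg_fam_def)
    show ?thesis
      using Psi_level_sums[OF summable_fam_sol[OF s] nonneg i, of s] Phi_eq_Psi[OF nonneg i]
      by (simp add: F_def sums_def level_flux_def)
  qed
  show "level_flux i integrable_on {0..t}"
    by (rule dominated_convergence(1)[OF F_int integrable_const_ivl F_le F_lim])
  have "(\<lambda>N. integral {0..t} (F N)) \<longlonglongrightarrow> integral {0..t} (level_flux i)"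
    by (rule dominated_convergence(2)[OF F_int integrable_const_ivl F_le F_lim])
  moreover have "integral {0..t} (F N) = (\<Sum>j<N. integral {0..t} (\<lambda>s. Phi s (sol s) i j))" for N
    unfolding F_def by (intro integral_sum Phi_path_integrable_on[OF continuous_path_sol i]) auto
  ultimately show "(\<lambda>j. integral {0..t} (\<lambda>s. Phi s (sol s) i j)) sums integral {0..t} (level_flux i)"
    by (simp add: sums_def)
qed

lemma fam_norm_sol:
  assumes t: "0 \<le> t"
  shows "fam_norm M (sol t) = 1"
proof -
  have level: "(\<Sum>j. sol t i j) = (if i = x0 then 1 else 0) + integral {0..t} (level_flux i)" if i: "i \<le> M" for i
    using sums_unique[OF sums_add[OF P0_sums integral_Phi_sol_sums(2)[OF t i]]] sol_fixed_point[OF t i]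
    by simp
  have "fam_norm M (sol t) = (\<Sum>i\<le>M. \<Sum>j. sol t i j)"
    unfolding fam_norm_def using sol_nonneg[OF t] by (intro sum.cong refl) auto
  also have "\<dots> = 1 + (\<Sum>i\<le>M. integral {0..t} (level_flux i))"
    using x0_le by (simp add: level sum.distrib)
  also have "(\<Sum>i\<le>M. integral {0..t} (level_flux i)) = integral {0..t} (\<lambda>s. \<Sum>i\<le>M. level_flux i s)"
    using integral_Phi_sol_sums(1)[OF t] by (intro integral_sum[symmetric]) auto
  finally show ?thesis by (simp add: sum_level_flux)
qed

lemma sol_is_solution: "is_solution M lam f mu x0 y0 sol"
  unfolding is_solution_def
proof (intro conjI allI impI)
  fix t :: real assume t: "0 \<le> t"
  show "nonneg_fam M (sol t)" using sol_nonneg[OF t] by (simp add: nonneg_fam_def)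
  show "summable_fam M (sol t)" by (rule summable_fam_sol[OF t])
  show "((\<lambda>s. fam_norm M (fam_diff (sol s) (sol t))) \<longlongrightarrow> 0) (at t within {0..})"
    using continuous_path_sol t by (simp add: continuous_path_def)
  fix i j assume i: "i \<le> M"
  have "((\<lambda>s. Phi s (sol s) i j) has_integral integral {0..t} (\<lambda>s. Phi s (sol s) i j)) {0..t}"
    by (rule integrable_integral[OF Phi_path_integrable_on[OF continuous_path_sol i order_refl]])
  then have "((\<lambda>s. Phi s (sol s) i j) has_integral (sol t i j - P0 x0 y0 i j)) {0..t}"
    using sol_fixed_point[OF t i, of j] by simp
  moreover have "Phi s (sol s) i j = Psi M lam f mu s (sol s) i j" if "s \<in> {0..t}" for s
    using that sol_nonneg i by (intro Phi_eq_Psi) (auto simp: nonneg_fam_def)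
  ultimately show "((\<lambda>s. Psi M lam f mu s (sol s) i j) has_integral (sol t i j - P0 x0 y0 i j)) {0..t}"
    by (subst has_integral_cong[symmetric])
qed

lemma solution_fixed_point:
  assumes Q: "is_solution M lam f mu x0 y0 Q" and t: "0 \<le> t" and i: "i \<le> M"
  shows "Q t i j = P0 x0 y0 i j + integral {0..t} (\<lambda>s. Phi s (Q s) i j)"
proof -
  have "((\<lambda>s. Psi M lam f mu s (Q s) i j) has_integral (Q t i j - P0 x0 y0 i j)) {0..t}"
    using Q t i by (simp add: is_solution_def)
  moreover have "Phi s (Q s) i j = Psi M lam f mu s (Q s) i j" if "s \<in> {0..t}" for s
    using that Q i by (intro Phi_eq_Psi) (auto simp: is_solution_def)
  ultimately have "((\<lambda>s. Phi s (Q s) i j) has_integral (Q t i j - P0 x0 y0 i j)) {0..t}"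
    by (subst has_integral_cong)
  then show ?thesis by (simp add: integral_unique)
qed

lemma solution_unique:
  assumes Q: "is_solution M lam f mu x0 y0 Q" and t: "0 \<le> t" and i: "i \<le> M"
  shows "Q t i j = sol t i j"
proof -
  have Q_path: "continuous_path Q"
    using Q by (simp add: is_solution_def continuous_path_def)
  obtain Lm where Lm: "rate_bound t Lm" using rate_bound_exists by blast
  obtain B where B: "\<forall>s\<in>{0..t}. fam_norm M (Q s) \<le> B"
    using continuous_path_norm_bounded[OF Q_path] by blast
  define D where "D = B + 1"
  define L where "L = lip_Phi Lm"
  have diff_eq: "fam_norm M (fam_diff (Q s) (sol s)) = fam_norm M (fam_diff (Phi_integral Q 0 s) (Phi_integral sol 0 s))"
    if "0 \<le> s" for s
    using solution_fixed_point[OF Q that] sol_fixed_point[OF that] by (intro fam_norm_cong) auto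
  have gronwall: "fam_norm M (fam_diff (Q s) (sol s)) \<le> D * ((L * s) ^ n / fact n)" if "s \<in> {0..t}" for n s
    using that
  proof (induction n arbitrary: s)
    case 0
    then have "fam_norm M (fam_diff (Q s) (sol s)) \<le> fam_norm M (Q s) + fam_norm M (sol s)"
      by (intro fam_norm_diff_le continuous_path_summable[OF Q_path] summable_fam_sol) auto
    moreover have "fam_norm M (Q s) \<le> B" and "fam_norm M (sol s) = 1"
      using 0 B fam_norm_sol by auto
    ultimately show ?case by (simp add: D_def)
  next
    case (Suc n)
    then show ?case
      using Phi_integral_dist_power_le[OF Q_path continuous_path_sol _ rate_bound_mono[OF Lm], of s D n]
        diff_eq[of s]
      by (simp add: L_def)
  qed
  have "(\<lambda>n. D * ((L * t) ^ n / fact n)) \<longlonglongrightarrow> D * 0"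
    by (intro tendsto_mult tendsto_const summable_LIMSEQ_zero summable_exp_terms)
  then have "fam_norm M (fam_diff (Q t) (sol t)) \<le> D * 0"
    by (rule LIMSEQ_le_const) (use gronwall t in auto)
  moreover have "\<bar>Q t i j - sol t i j\<bar> \<le> fam_norm M (fam_diff (Q t) (sol t))"
    using abs_le_fam_norm[OF summable_fam_diff[OF continuous_path_summable[OF Q_path t] summable_fam_sol[OF t]] i] .
  ultimately show ?thesis by simp
qed

lemma exists_unique_solution:
  "\<exists>P. is_solution M lam f mu x0 y0 P
     \<and> (\<forall>t\<ge>0. nonneg_fam M (P t) \<and> fam_norm M (P t) = 1)
     \<and> (\<forall>Q. is_solution M lam f mu x0 y0 Q \<longrightarrow> (\<forall>t\<ge>0. \<forall>i\<le>M. \<forall>j. Q t i j = P t i j))"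
proof (intro exI conjI allI impI)
  show "is_solution M lam f mu x0 y0 sol" by (rule sol_is_solution)
  fix t :: real assume t: "0 \<le> t"
  show "nonneg_fam M (sol t)" using sol_nonneg[OF t] by (simp add: nonneg_fam_def)
  show "fam_norm M (sol t) = 1" by (rule fam_norm_sol[OF t])
next
  fix Q and t :: real and i j :: nat
  assume "is_solution M lam f mu x0 y0 Q" and "0 \<le> t" and "i \<le> M"
  then show "Q t i j = sol t i j" by (rule solution_unique)
qed

end

theorem theorem2:
  fixes M :: nat and x0 :: nat and y0 :: nat
    and lam :: "real \<Rightarrow> nat \<Rightarrow> real"
    and f :: "real \<Rightarrow> real"
    and mu :: "nat \<Rightarrow> nat \<Rightarrow> nat \<Rightarrow> real"
  assumes M_pos: "1 \<le> M"
    and x0: "x0 \<le> M"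
    and lam_nonneg: "\<forall>t\<ge>0. \<forall>x\<le>M. 0 \<le> lam t x"
    and lam_right_cont: "\<forall>x\<le>M. \<forall>t\<ge>0. continuous (at_right t) (\<lambda>s. lam s x)"
    and lam_left_lim: "\<forall>x\<le>M. \<forall>t>0. \<exists>l. ((\<lambda>s. lam s x) \<longlongrightarrow> l) (at_left t)"
    and lam_M: "\<forall>t\<ge>0. lam t M = 0"
    and lam_bdd: "\<forall>T>0. \<exists>C. \<forall>t\<in>{0..T}. \<forall>x\<le>M. \<bar>lam t x\<bar> \<le> C"
    and f_cont: "continuous_on UNIV f"
    and f_bounds: "\<exists>fl fu. 0 < fl \<and> (\<forall>x. fl \<le> f x \<and> f x \<le> fu)"
    and mu_offdiag: "\<forall>k\<le>M. \<forall>i j. i \<noteq> j \<longrightarrow> 0 \<le> mu k i j"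
    and mu_diag: "\<forall>k\<le>M. \<forall>i. mu k i i \<le> 0"
    and mu_rows: "\<forall>k\<le>M. \<forall>i. (\<lambda>j. mu k i j) sums 0"
    and mu_bdd: "\<forall>k\<le>M. \<exists>C. \<forall>i. \<bar>mu k i i\<bar> \<le> C"
  shows "\<exists>P. is_solution M lam f mu x0 y0 P
           \<and> (\<forall>t\<ge>0. nonneg_fam M (P t) \<and> fam_norm M (P t) = 1)
           \<and> (\<forall>Q. is_solution M lam f mu x0 y0 Q \<longrightarrow>
                  (\<forall>t\<ge>0. \<forall>i\<le>M. \<forall>j. Q t i j = P t i j))"
proof -
  obtain fl fu where fl: "0 < fl" and f_between: "\<forall>x. fl \<le> f x \<and> f x \<le> fu"
    using f_bounds by blast
  obtain Ck where Ck: "\<And>k. k \<le> M \<Longrightarrow> \<forall>i. \<bar>mu k i i\<bar> \<le> Ck k"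
    using mu_bdd by metis
  define C where "C = Max (Ck ` {..M})"
  have C: "\<bar>mu k i i\<bar> \<le> C" if "k \<le> M" for k i
  proof -
    have "Ck k \<le> C" unfolding C_def using that by (intro Max_ge) auto
    then show ?thesis using Ck[OF that] by (meson order_trans)
  qed
  interpret fokker_planck f fl fu M lam mu C x0 y0
    using fl f_between M_pos x0 lam_nonneg lam_right_cont lam_bdd mu_offdiag mu_diag mu_rows C
    by unfold_locales auto
  show ?thesis by (rule exists_unique_solution)
qed

end
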